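(* Let $\lambda\in\Lambda(n,r)$ and write $S=S_0(n,r)$. (1) If $\lambda_i\lambda_{i+1}=0$ then $a_i(\lambda)=k_\lambda$. (2) For every decomposition $\underline m$ of $n$, the left ideal $S\,o_{\lambda,\underline m}$ is spanned by the orbits $e_A$ with $\mathrm{co}(A)=\lambda$ and $A$ column generic with respect to $\underline m$; in particular $S\,a_i(\lambda)$ is spanned by the $e_A$ with $\mathrm{co}(A)=\lambda$ whose submatrix formed by columns $i,i+1$ is generic. (3) The right ideal $o_{\lambda,\underline m}S$ is spanned by the orbits $e_A$ with $\mathrm{ro}(A)=\lambda$ and $A$ row generic with respect to $\underline m$.
   Context: Setup: Fix positive integers $n,r$ and a field $k$. $\Lambda(n,r)$: compositions of $r$ into $n$ nonnegative parts. $\Theta(n,r)$: $n\times n$ nonnegative integer matrices $A=(a_{ij})$ with entry sum $r$, with row/column-sum vectors $\mathrm{ro}(A),\mathrm{co}(A)$. For an $r$-dimensional $V$ (finite or algebraically closed field), $\mathcal F_\lambda$ denotes flags $0=V_0\subseteq\cdots\subseteq V_n=V$ with $\dim V_i/V_{i-1}=\lambda_i$; $GL(V)$-orbits $e_A$ on pairs of flags correspond to $A\in\Theta(n,r)$ via $a_{ij}=\dim(V_i\cap V'_j)-\dim(V_i\cap V'_{j-1}+V_{i-1}\cap V'_j)$. The $0$-Schur algebra $S_0(n,r)$ (specialization at $q=0$ of the $q$-Schur algebra, tensored with $k$) has basis $\{e_A\}$ with $e_Ae_B=0$ if $\mathrm{co}(A)\ne\mathrm{ro}(B)$, otherwise $e_Ae_B$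 is the unique open orbit among pairs $(f,h)$ with $(f,g)\in e_A,(g,h)\in e_B$ for some $g$. $k_\lambda=e_{\mathrm{diag}(\lambda)}$, $o_\lambda$ the open orbit in $\mathcal F_\lambda\times\mathcal F_\lambda$. For a decomposition $\underline p=(p_1,\dots,p_s)$ of $n$ (positive integers summing to $n$), $\lambda^i=(\lambda_{p_1+\cdots+p_{i-1}+1},\dots,\lambda_{p_1+\cdots+p_i})$ and $o_{\lambda,\underline p}=e_A$ with $A$ block diagonal (blocks of sizes $p_i$), $i$-th block the matrix of the open orbit $o_{\lambda^i}$, other entries $0$. $a_i(\lambda)=o_{\lambda,\underline m}$ where $\underline m=(1,\dots,1,2,1,\dots,1)$ has $2$ in position $i$. A matrix is generic if every $2\times2$ submatrix (rows $i<j$, columns $s<t$) satisfies $a_{is}a_{jt}=0$. For a decomposition $\underline m=(m_1,\dots,m_s)$, $A$ is column (resp. row) generic with respect to $\underline m$ if for each $i$ the submatrix formed by the columns (resp. rows) $m_1+\cdots+m_{i-1}+1,\dots,m_1+\cdots+m_i$ is generic. *)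

theory Defs
  imports Complex_Main "HOL-Library.Function_Algebras"
begin

type_synonym vect = "nat \<Rightarrow> complex"
type_synonym mat = "nat \<Rightarrow> nat \<Rightarrow> nat"
type_synonym comp = "nat \<Rightarrow> nat"

definition cscale :: "complex \<Rightarrow> vect \<Rightarrow> vect" where
  "cscale c v = (\<lambda>i. c * v i)"

definition csub :: "vect set \<Rightarrow> bool" where
  "csub U = module.subspace cscale U"

definition cdim :: "vect set \<Rightarrow> nat" where
  "cdim U = vector_space.dim cscale U"

definition Vsp :: "nat \<Rightarrow> vect set" where
  "Vsp r = {v. \<forall>i\<ge>r. v i = 0}"

definition ssum :: "vect set \<Rightarrow> vect set \<Rightarrow> vect set" where
  "ssum U W = {x + y |x y. x \<in> U \<and> y \<in> W}"

definition is_flag :: "nat \<Rightarrow> nat \<Rightarrow> comp \<Rightarrow> (nat \<Rightarrow> vect set) \<Rightarrow> bool" where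
  "is_flag n r lam F \<longleftrightarrow> F 0 = {0} \<and> F n = Vsp r \<and>
     (\<forall>i\<in>{1..n}. csub (F i) \<and> F (i - 1) \<subseteq> F i \<and> cdim (F i) = cdim (F (i - 1)) + lam i)"

definition relpos :: "nat \<Rightarrow> (nat \<Rightarrow> vect set) \<Rightarrow> (nat \<Rightarrow> vect set) \<Rightarrow> mat" where
  "relpos n F G = (\<lambda>i j. if i \<in> {1..n} \<and> j \<in> {1..n} then
      cdim (F i \<inter> G j) - cdim (ssum (F i \<inter> G (j - 1)) (F (i - 1) \<inter> G j)) else 0)"

definition Lam :: "nat \<Rightarrow> nat \<Rightarrow> comp set" where
  "Lam n r = {lam. (\<forall>i. lam i \<noteq> 0 \<longrightarrow> i \<in> {1..n}) \<and> (\<Sum>i=1..n. lam i) = r}"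

definition Theta :: "nat \<Rightarrow> nat \<Rightarrow> mat set" where
  "Theta n r = {A. (\<forall>i j. A i j \<noteq> 0 \<longrightarrow> i \<in> {1..n} \<and> j \<in> {1..n}) \<and>
                   (\<Sum>i=1..n. \<Sum>j=1..n. A i j) = r}"

definition ro :: "nat \<Rightarrow> mat \<Rightarrow> comp" where
  "ro n A = (\<lambda>i. \<Sum>j=1..n. A i j)"

definition co :: "nat \<Rightarrow> mat \<Rightarrow> comp" where
  "co n A = (\<lambda>j. \<Sum>i=1..n. A i j)"

definition diagm :: "comp \<Rightarrow> mat" where
  "diagm lam = (\<lambda>i j. if i = j then lam i else 0)"

text \<open>Dimension of the stabilizer in GL(V) of a pair of flags in relative position A;
  the orbit has dimension r^2 minus this, so the open orbit (maximal dimension)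
  is the one with minimal stabilizer dimension.\<close>
definition stabdim :: "nat \<Rightarrow> mat \<Rightarrow> nat" where
  "stabdim n A = (\<Sum>i=1..n. \<Sum>j=1..n. \<Sum>k=1..i. \<Sum>l=1..j. A i j * A k l)"

definition occurs :: "nat \<Rightarrow> nat \<Rightarrow> mat \<Rightarrow> mat \<Rightarrow> mat \<Rightarrow> bool" where
  "occurs n r A B C \<longleftrightarrow> (\<exists>F G H. is_flag n r (ro n A) F \<and> is_flag n r (co n A) G \<and>
      is_flag n r (co n B) H \<and> relpos n F G = A \<and> relpos n G H = B \<and> relpos n F H = C)"

definition gprod :: "nat \<Rightarrow> nat \<Rightarrow> mat \<Rightarrow> mat \<Rightarrow> mat" where
  "gprod n r A B = (THE C. occurs n r A B C \<and>
      (\<forall>C'. occurs n r A B C' \<and> C' \<noteq> C \<longrightarrow> stabdim n C < stabdim n C'))"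

definition open_orb :: "nat \<Rightarrow> comp \<Rightarrow> mat" where
  "open_orb n lam = (THE A. A \<in> Theta n (\<Sum>i=1..n. lam i) \<and> ro n A = lam \<and> co n A = lam \<and>
      (\<forall>A'. A' \<in> Theta n (\<Sum>i=1..n. lam i) \<and> ro n A' = lam \<and> co n A' = lam \<and> A' \<noteq> A
            \<longrightarrow> stabdim n A < stabdim n A'))"

definition S0 :: "nat \<Rightarrow> nat \<Rightarrow> (mat \<Rightarrow> 'k::field) set" where
  "S0 n r = {x. \<forall>A. x A \<noteq> 0 \<longrightarrow> A \<in> Theta n r}"

definition eorb :: "mat \<Rightarrow> (mat \<Rightarrow> 'k::field)" where
  "eorb A = (\<lambda>C. if C = A then 1 else 0)"

definition smult :: "nat \<Rightarrow> nat \<Rightarrow> (mat \<Rightarrow> 'k::field) \<Rightarrow> (mat \<Rightarrow> 'k) \<Rightarrow> (mat \<Rightarrow> 'k)" where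
  "smult n r x y = (\<lambda>C. \<Sum>A\<in>Theta n r. \<Sum>B\<in>Theta n r.
      (if co n A = ro n B \<and> gprod n r A B = C then x A * y B else 0))"

definition kspan :: "mat set \<Rightarrow> (mat \<Rightarrow> 'k::field) set" where
  "kspan T = {x. \<exists>c. x = (\<lambda>C. \<Sum>A\<in>T. c A * eorb A C)}"

definition is_decomp :: "nat \<Rightarrow> nat list \<Rightarrow> bool" where
  "is_decomp n p \<longleftrightarrow> (\<forall>x\<in>set p. 0 < x) \<and> sum_list p = n"

definition ps :: "nat list \<Rightarrow> nat \<Rightarrow> nat" where
  "ps p i = sum_list (take i p)"

definition inblock :: "nat list \<Rightarrow> nat \<Rightarrow> nat \<Rightarrow> bool" where
  "inblock p i a \<longleftrightarrow> ps p i < a \<and> a \<le> ps p (Suc i)"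

text \<open>lam^i, the i-th piece (0-based i) of lam w.r.t. p, as a composition with p!i parts.\<close>
definition piece :: "comp \<Rightarrow> nat list \<Rightarrow> nat \<Rightarrow> comp" where
  "piece lam p i = (\<lambda>j. if 1 \<le> j \<and> j \<le> p ! i then lam (ps p i + j) else 0)"

definition o_blk :: "comp \<Rightarrow> nat list \<Rightarrow> mat" where
  "o_blk lam p = (\<lambda>a b. \<Sum>i<length p. if inblock p i a \<and> inblock p i b
      then open_orb (p ! i) (piece lam p i) (a - ps p i) (b - ps p i) else 0)"

definition mdec :: "nat \<Rightarrow> nat \<Rightarrow> nat list" where
  "mdec n i = replicate (i - 1) 1 @ [2] @ replicate (n - i - 1) 1"

definition a_orb :: "nat \<Rightarrow> comp \<Rightarrow> nat \<Rightarrow> mat" where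
  "a_orb n lam i = o_blk lam (mdec n i)"

definition generic_sub :: "nat set \<Rightarrow> nat set \<Rightarrow> mat \<Rightarrow> bool" where
  "generic_sub R J A \<longleftrightarrow> (\<forall>i\<in>R. \<forall>j\<in>R. \<forall>s\<in>J. \<forall>t\<in>J. i < j \<and> s < t \<longrightarrow> A i s * A j t = 0)"

definition col_generic :: "nat \<Rightarrow> nat list \<Rightarrow> mat \<Rightarrow> bool" where
  "col_generic n p A \<longleftrightarrow> (\<forall>i<length p. generic_sub {1..n} {ps p i + 1..ps p (Suc i)} A)"

definition row_generic :: "nat \<Rightarrow> nat list \<Rightarrow> mat \<Rightarrow> bool" where
  "row_generic n p A \<longleftrightarrow> (\<forall>i<length p. generic_sub {ps p i + 1..ps p (Suc i)} {1..n} A)"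

end

theory Submission
  imports Defs
begin

text \<open>The relative position \<open>A\<close> of two flags \<open>(F, G)\<close> is recovered from the dimensions
  \<open>dim (F\<^sub>i \<inter> G\<^sub>j)\<close>, which are its corner sums. For a decomposition \<open>p\<close>,
  \<open>2 \<cdot> stabdim M\<close> splits into a part depending only on the block data of \<open>M\<close> (the corner sums
  ending at block boundaries, and the column sums) plus a nonnegative excess vanishing exactly when
  \<open>M\<close> is column generic; as a column generic matrix is determined by its block data, it is the
  unique open orbit among the matrices with the same block data.

  Given \<open>A\<close> with \<open>co A = \<lambda>\<close>, realise \<open>A\<close> by coordinate flags \<open>(F, G)\<close> and, using that the
  field is infinite, refine \<open>G\<close> inside every block of \<open>p\<close> to a flag \<open>H\<close> in general position
  with respect to all \<open>F\<^sub>i\<close> and \<open>G\<^sub>j\<close>. Then \<open>relpos G H\<close> is column generic with the block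
  data of \<open>diag \<lambda>\<close>, so it is \<open>o\<^sub>\<lambda>\<^sub>,\<^sub>p\<close>, and \<open>relpos F H\<close> is column generic with the block
  data of \<open>A\<close>. As \<open>G\<close> and \<open>H\<close> agree at the block boundaries, every orbit occurring in
  \<open>e\<^sub>A o\<^sub>\<lambda>\<^sub>,\<^sub>p\<close> has the block data of \<open>A\<close>; so the product is the column generic matrix with the
  block data of \<open>A\<close>, which is \<open>A\<close> itself if \<open>A\<close> is column generic. Hence right multiplication
  by \<open>o\<^sub>\<lambda>\<^sub>,\<^sub>p\<close> retracts the orbits with \<open>co A = \<lambda>\<close> onto the column generic ones, which gives (2);
  (3) follows by transposition, and (1) holds because \<open>diag \<lambda>\<close> is itself generic in the
  columns \<open>i, i + 1\<close> when \<open>\<lambda>\<^sub>i \<lambda>\<^sub>i\<^sub>+\<^sub>1 = 0\<close>.\<close>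

section \<open>Dimensions of coordinate subspaces\<close>

interpretation cs: vector_space cscale
  by unfold_locales (auto simp: cscale_def fun_eq_iff algebra_simps)

lemma sum_fun_apply: "(\<Sum>a\<in>A. f a) x = (\<Sum>a\<in>A. f a x)"
  by (induct A rule: infinite_finite_induct) auto

definition unit_vec :: "nat \<Rightarrow> vect" where
  "unit_vec k = (\<lambda>i. if i = k then 1 else 0)"

definition coord_space :: "nat set \<Rightarrow> vect set" where
  "coord_space S = {v. \<forall>i. i \<notin> S \<longrightarrow> v i = 0}"

lemma Vsp_eq_coord_space: "Vsp r = coord_space {..<r}"
  unfolding Vsp_def coord_space_def by auto

lemma zero_eq_coord_space: "{0} = coord_space {}"
  by (auto simp: coord_space_def fun_eq_iff)

lemma coord_space_Int: "coord_space S \<inter> coord_space T = coord_space (S \<inter> T)"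
  unfolding coord_space_def by auto

lemma coord_space_mono: "S \<subseteq> T \<Longrightarrow> coord_space S \<subseteq> coord_space T"
  unfolding coord_space_def by auto

lemma csub_coord_space: "csub (coord_space S)"
  unfolding csub_def cs.subspace_def by (auto simp: coord_space_def cscale_def)

lemma csub_zero: "csub {0}"
  by (simp add: zero_eq_coord_space csub_coord_space)

lemma csub_Vsp: "csub (Vsp N)"
  by (simp add: Vsp_eq_coord_space csub_coord_space)

lemma csub_Int: "csub U \<Longrightarrow> csub W \<Longrightarrow> csub (U \<inter> W)"
  unfolding csub_def by (rule cs.subspace_inter)

lemma csub_ssum: "csub U \<Longrightarrow> csub W \<Longrightarrow> csub (ssum U W)"
  unfolding csub_def ssum_def by (rule cs.subspace_sums)

lemma csub_span: "csub (cs.span X)"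
  by (simp add: csub_def)

lemma inj_unit_vec: "inj unit_vec"
  unfolding inj_def unit_vec_def fun_eq_iff by (metis one_neq_zero)

lemma span_unit_vec:
  assumes "finite S" shows "cs.span (unit_vec ` S) = coord_space S"
proof
  show "cs.span (unit_vec ` S) \<subseteq> coord_space S"
    by (rule cs.span_minimal) (use csub_coord_space[of S] in \<open>auto simp: csub_def unit_vec_def coord_space_def\<close>)
  show "coord_space S \<subseteq> cs.span (unit_vec ` S)"
  proof
    fix v assume v: "v \<in> coord_space S"
    have "v = (\<Sum>k\<in>S. cscale (v k) (unit_vec k))"
      using v assms by (auto simp: fun_eq_iff sum_fun_apply cscale_def unit_vec_def coord_space_def
          if_distrib cong: if_cong)
    also have "\<dots> \<in> cs.span (unit_vec ` S)"
      by (intro cs.span_sum cs.span_scale cs.span_base) auto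
    finally show "v \<in> cs.span (unit_vec ` S)" .
  qed
qed

lemma independent_unit_vec: "cs.independent (unit_vec ` S)"
proof
  assume "cs.dependent (unit_vec ` S)"
  then obtain T u where T: "finite T" "T \<subseteq> unit_vec ` S" and u: "(\<Sum>v\<in>T. cscale (u v) v) = 0"
    and "\<exists>v\<in>T. u v \<noteq> 0"
    unfolding cs.dependent_explicit by blast
  then obtain k where k: "unit_vec k \<in> T" "u (unit_vec k) \<noteq> 0" using T by blast
  have "(\<Sum>v\<in>T. cscale (u v) v) k = (\<Sum>v\<in>T. if v = unit_vec k then u v else 0)"
    unfolding sum_fun_apply
    by (intro sum.cong) (auto simp: cscale_def unit_vec_def dest!: subsetD[OF T(2)] split: if_splits)
  also have "\<dots> = u (unit_vec k)" using T k by simp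
  finally show False using u k by simp
qed

lemma cdim_coord_space:
  assumes "finite S" shows "cdim (coord_space S) = card S"
proof -
  have "cdim (coord_space S) = card (unit_vec ` S)"
    unfolding cdim_def span_unit_vec[OF assms, symmetric]
    by (rule cs.dim_span_eq_card_independent[OF independent_unit_vec])
  also have "\<dots> = card S" by (rule card_image) (meson inj_unit_vec inj_on_subset subset_UNIV)
  finally show ?thesis .
qed

lemma cdim_zero: "cdim {0} = 0"
  by (simp add: zero_eq_coord_space cdim_coord_space)

lemma independent_Vsp_bound:
  assumes "cs.independent X" "X \<subseteq> Vsp N" shows "finite X \<and> card X \<le> N"
proof -
  have "finite X \<and> card X \<le> card (unit_vec ` {..<N})"
    by (rule cs.independent_span_bound)
       (use assms span_unit_vec[of "{..<N}"] in \<open>auto simp: Vsp_eq_coord_space\<close>)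
  then show ?thesis by (simp add: card_image inj_on_subset[OF inj_unit_vec])
qed

lemma obtain_basis_Vsp:
  assumes "csub U" "U \<subseteq> Vsp N"
  obtains B where "finite B" "cs.independent B" "cs.span B = U" "card B = cdim U"
proof -
  obtain B where B: "B \<subseteq> U" "cs.independent B" "U \<subseteq> cs.span B" "card B = cs.dim U"
    by (rule cs.basis_exists)
  have "cs.span B = U"
    using B assms(1) cs.span_minimal[OF B(1)] by (auto simp: csub_def)
  moreover have "finite B" using independent_Vsp_bound[of B N] B assms by auto
  ultimately show ?thesis using that B by (simp add: cdim_def)
qed

lemma independent_card_le_cdim:
  assumes "X \<subseteq> U" "cs.independent X" "U \<subseteq> Vsp N"
  shows "card X \<le> cdim U"
proof -
  obtain C where C: "X \<subseteq> C" "C \<subseteq> U" "cs.independent C" "U \<subseteq> cs.span C"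
    using cs.maximal_independent_subset_extend assms by blast
  have "finite C" using independent_Vsp_bound[of C N] C assms by auto
  moreover have "card C = cdim U" using cs.basis_card_eq_dim[of C U] C by (simp add: cdim_def)
  ultimately show ?thesis using C card_mono by metis
qed

lemma cdim_mono:
  assumes "U \<subseteq> W" "csub U" "W \<subseteq> Vsp N"
  shows "cdim U \<le> cdim W"
proof -
  obtain B where "cs.independent B" "cs.span B = U" "card B = cdim U"
    using obtain_basis_Vsp[OF assms(2) subset_trans[OF assms(1,3)]] by blast
  then show ?thesis
    using independent_card_le_cdim[of B W N] assms cs.span_superset[of B] by auto
qed

lemma subspace_eq_if_cdim_le:
  assumes "csub U" "U \<subseteq> W" "W \<subseteq> Vsp N" "cdim W \<le> cdim U"
  shows "U = W"
proof (rule ccontr)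
  assume "U \<noteq> W"
  then obtain w where w: "w \<in> W" "w \<notin> U" using assms by auto
  obtain B where B: "finite B" "cs.independent B" "cs.span B = U" "card B = cdim U"
    using obtain_basis_Vsp[OF assms(1) subset_trans[OF assms(2,3)]] by blast
  have "w \<notin> B" using w B cs.span_superset by blast
  have "cs.independent (insert w B)" using B w cs.independent_insertI by simp
  moreover have "insert w B \<subseteq> W" using B w assms cs.span_superset by blast
  ultimately have "card (insert w B) \<le> cdim W" using independent_card_le_cdim assms by blast
  then show False using B \<open>w \<notin> B\<close> assms(4) by simp
qed

lemma ssum_least: "csub W \<Longrightarrow> U \<subseteq> W \<Longrightarrow> U' \<subseteq> W \<Longrightarrow> ssum U U' \<subseteq> W"
  unfolding csub_def ssum_def using cs.subspace_add by blast

lemma ssum_upper1: "csub U' \<Longrightarrow> U \<subseteq> ssum U U'"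
proof
  fix x assume "csub U'" "x \<in> U"
  then have "x = x + 0 \<and> x \<in> U \<and> 0 \<in> U'" unfolding csub_def using cs.subspace_0 by auto
  then show "x \<in> ssum U U'" unfolding ssum_def by blast
qed

lemma ssum_upper2: "csub U \<Longrightarrow> U' \<subseteq> ssum U U'"
  unfolding csub_def ssum_def using cs.subspace_0 by force

lemma ssum_commute: "ssum U W = ssum W U"
  unfolding ssum_def by (metis (no_types, lifting) add.commute)

lemma ssum_assoc: "ssum U (ssum H L) = ssum (ssum U H) L"
  unfolding ssum_def by (auto, metis add.assoc, metis add.assoc)

lemma ssum_span: "ssum (cs.span X) (cs.span Y) = cs.span (X \<union> Y)"
  unfolding ssum_def cs.span_Un ..

lemma cdim_add_line:
  assumes "csub X" "X \<subseteq> Vsp N" "v \<notin> X"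
  shows "cdim (ssum X (cs.span {v})) = cdim X + 1"
proof -
  obtain B where B: "finite B" "cs.independent B" "cs.span B = X" "card B = cdim X"
    using obtain_basis_Vsp[OF assms(1,2)] by blast
  have "v \<notin> B" using B assms(3) cs.span_superset by blast
  have "ssum X (cs.span {v}) = cs.span (insert v B)"
    using ssum_span[of B "{v}"] B by simp
  moreover have "cs.independent (insert v B)" using B assms(3) cs.independent_insertI by simp
  ultimately show ?thesis
    using cs.dim_span_eq_card_independent B \<open>v \<notin> B\<close> by (simp add: cdim_def)
qed

lemma span_subset_Vsp: "X \<subseteq> Vsp N \<Longrightarrow> cs.span X \<subseteq> Vsp N"
  using cs.span_minimal csub_Vsp[of N] by (simp add: csub_def)

lemma span_insert_decomp: "v \<in> cs.span (insert x X) \<Longrightarrow> \<exists>k. v - cscale k x \<in> cs.span X"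
  using cs.span_insert by auto

lemma ssum_span_insert_absorb:
  assumes S: "csub S" and x: "x \<in> ssum S (cs.span X)"
  shows "ssum S (cs.span (insert x X)) = ssum S (cs.span X)"
proof -
  have SY: "csub (ssum S (cs.span X))" using S csub_ssum csub_span by blast
  have "cs.span (insert x X) \<subseteq> ssum S (cs.span X)"
    using x SY ssum_upper2[OF S, of "cs.span X"] cs.span_superset[of X]
    by (intro cs.span_minimal) (auto simp: csub_def)
  then show ?thesis
    using cs.span_mono[of X "insert x X"] ssum_least[OF SY ssum_upper1[OF csub_span]]
    unfolding ssum_def by blast
qed

lemma Int_span_insert_in_ssum:
  assumes S: "csub S" and sy: "x = s + y" "s \<in> S" "y \<in> cs.span X"
  shows "S \<inter> cs.span (insert x X) = ssum (S \<inter> cs.span X) (cs.span {s})"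
proof
  let ?Y = "cs.span X" and ?Y' = "cs.span (insert x X)"
  show "S \<inter> ?Y' \<subseteq> ssum (S \<inter> ?Y) (cs.span {s})"
  proof
    fix v assume v: "v \<in> S \<inter> ?Y'"
    then obtain k where k: "v - cscale k x \<in> ?Y" using span_insert_decomp by blast
    have "v - cscale k s = (v - cscale k x) + cscale k y"
      using sy by (simp add: cscale_def fun_eq_iff algebra_simps)
    then have "v - cscale k s \<in> ?Y" using cs.span_add[OF k cs.span_scale[OF sy(3)]] by metis
    moreover have "v - cscale k s \<in> S"
      using v sy S cs.subspace_diff cs.subspace_scale unfolding csub_def by blast
    moreover have "cscale k s \<in> cs.span {s}" by (simp add: cs.span_base cs.span_scale)
    moreover have "v = (v - cscale k s) + cscale k s" by simp
    ultimately show "v \<in> ssum (S \<inter> ?Y) (cs.span {s})" unfolding ssum_def by blast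
  qed
  have "x \<in> ?Y'" by (rule cs.span_base) simp
  moreover have "y \<in> ?Y'" using sy(3) cs.span_mono[of X "insert x X"] by blast
  ultimately have "s \<in> ?Y'" using cs.span_diff sy(1) by fastforce
  then show "ssum (S \<inter> ?Y) (cs.span {s}) \<subseteq> S \<inter> ?Y'"
    using csub_Int[OF S csub_span] cs.span_mono[of X "insert x X"] sy(2)
    by (intro ssum_least cs.span_minimal) (auto simp: csub_def)
qed

lemma Int_span_insert_notin_ssum:
  assumes S: "csub S" and x: "x \<notin> ssum S (cs.span X)"
  shows "S \<inter> cs.span (insert x X) = S \<inter> cs.span X"
proof -
  have "v \<in> cs.span X" if v: "v \<in> S \<inter> cs.span (insert x X)" for v
  proof -
    obtain k where k: "v - cscale k x \<in> cs.span X" using v span_insert_decomp by blast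
    show ?thesis
    proof (cases "k = 0")
      case True then show ?thesis using k by simp
    next
      case False
      have "cscale k x = v + - (v - cscale k x)" by simp
      also have "\<dots> \<in> ssum S (cs.span X)" using v k cs.span_neg unfolding ssum_def by blast
      finally have "cscale (inverse k) (cscale k x) \<in> ssum S (cs.span X)"
        using csub_ssum[OF S csub_span] cs.subspace_scale unfolding csub_def by blast
      then show ?thesis using x False by (simp add: cs.scale_scale)
    qed
  qed
  then show ?thesis using cs.span_mono[of X "insert x X"] by blast
qed

lemma cdim_ssum_Int_span:
  assumes S: "csub S" "S \<subseteq> Vsp N"
    and X: "finite X" "cs.independent X" "X \<subseteq> Vsp N"
  shows "cdim (ssum S (cs.span X)) + cdim (S \<inter> cs.span X) = cdim S + card X"
  using X
proof (induction X rule: finite_induct)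
  case empty
  have "ssum S {0} = S" and "S \<inter> {0} = {0}"
    using S(1) cs.subspace_0 by (auto simp: csub_def ssum_def)
  then show ?case by (simp add: cdim_zero)
next
  case (insert x X)
  let ?Y = "cs.span X" and ?Y' = "cs.span (insert x X)"
  have "cs.independent X" "x \<notin> ?Y"
    using insert.prems(1) insert.hyps(2) cs.independent_insert[of x X] by simp_all
  then have x: "x \<notin> ?Y" and IH: "cdim (ssum S ?Y) + cdim (S \<inter> ?Y) = cdim S + card X"
    using insert.IH insert.prems(2) by auto
  have YN: "?Y \<subseteq> Vsp N" using insert.prems span_subset_Vsp by auto
  show ?case
  proof (cases "x \<in> ssum S ?Y")
    case True
    then obtain s y where sy: "x = s + y" "s \<in> S" "y \<in> ?Y" unfolding ssum_def by blast
    have "s \<notin> S \<inter> ?Y" using sy x cs.span_add[of s X y] by auto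
    then have "cdim (S \<inter> ?Y') = cdim (S \<inter> ?Y) + 1"
      unfolding Int_span_insert_in_ssum[OF S(1) sy] using S YN
      by (intro cdim_add_line csub_Int) (auto simp: csub_span)
    then show ?thesis using IH ssum_span_insert_absorb[OF S(1) True] insert.hyps by simp
  next
    case False
    have "ssum S ?Y' = ssum (ssum S ?Y) (cs.span {x})"
      using ssum_span[of X "{x}"] ssum_assoc[of S ?Y "cs.span {x}"] by simp
    moreover have "ssum S ?Y \<subseteq> Vsp N" using ssum_least[OF csub_Vsp S(2) YN] .
    ultimately show ?thesis
      using IH cdim_add_line[OF csub_ssum[OF S(1) csub_span] _ False] insert.hyps
        Int_span_insert_notin_ssum[OF S(1) False] by simp
  qed
qed

lemma grassmann:
  assumes "csub S" "csub T" "S \<subseteq> Vsp N" "T \<subseteq> Vsp N"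
  shows "cdim (ssum S T) + cdim (S \<inter> T) = cdim S + cdim T"
proof -
  obtain X where X: "finite X" "cs.independent X" "cs.span X = T" "card X = cdim T"
    using obtain_basis_Vsp[OF assms(2,4)] by blast
  moreover have "X \<subseteq> Vsp N" using X assms(4) cs.span_superset by blast
  ultimately show ?thesis using cdim_ssum_Int_span[OF assms(1,3), of X] by simp
qed

section \<open>Subspaces in general position\<close>

lemma line_in_subspace:
  assumes V: "csub V" and ab: "u + cscale a w \<in> V" "u + cscale b w \<in> V" "a \<noteq> b"
  shows "w \<in> V"
proof -
  have "(u + cscale a w) - (u + cscale b w) = cscale (a - b) w"
    by (simp add: cscale_def fun_eq_iff algebra_simps)
  then have "cscale (a - b) w \<in> V" using V ab cs.subspace_diff unfolding csub_def by metis
  then have "cscale (inverse (a - b)) (cscale (a - b) w) \<in> V"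
    using V cs.subspace_scale unfolding csub_def by blast
  then show ?thesis using ab(3) by (simp add: cs.scale_scale)
qed

text \<open>The points \<open>u + t w\<close> (\<open>t \<in> \<nat>\<close>) all avoid \<open>V\<^sub>0\<close>, and by \<open>line_in_subspace\<close> each
  \<open>V\<close> contains at most one of them; this needs infinitely many scalars.\<close>
lemma proper_subspaces_not_cover:
  assumes W: "csub W" and fin: "finite VV"
    and VV: "\<And>V. V \<in> VV \<Longrightarrow> csub V \<and> V \<subseteq> W \<and> V \<noteq> W"
  shows "\<exists>w\<in>W. \<forall>V\<in>VV. w \<notin> V"
  using fin VV
proof (induct VV rule: finite_induct)
  case empty
  then show ?case using W cs.subspace_0 by (auto simp: csub_def)
next
  case (insert V0 VV)
  then obtain w where w: "w \<in> W" "\<forall>V\<in>VV. w \<notin> V" by blast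
  show ?case
  proof (cases "w \<in> V0")
    case False then show ?thesis using w by blast
  next
    case True
    have V0: "csub V0" "V0 \<subseteq> W" "V0 \<noteq> W" using insert by auto
    then obtain u where u: "u \<in> W" "u \<notin> V0" by blast
    define f where "f t = u + cscale (of_nat t) w" for t :: nat
    have fW: "f t \<in> W" for t
      using W u w unfolding f_def csub_def by (simp add: cs.subspace_add cs.subspace_scale)
    have fV0: "f t \<notin> V0" for t
    proof
      assume "f t \<in> V0"
      then have "f t - cscale (of_nat t) w \<in> V0"
        using V0 True unfolding csub_def by (simp add: cs.subspace_diff cs.subspace_scale)
      then show False using u by (simp add: f_def)
    qed
    show ?thesis
    proof (rule ccontr)
      assume "\<not> ?thesis"
      then have "\<forall>t. \<exists>V\<in>VV. f t \<in> V" using fW fV0 by blast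
      then obtain g where g: "\<And>t. g t \<in> VV \<and> f t \<in> g t" by metis
      have "\<not> inj_on g {0..card VV}"
      proof
        assume "inj_on g {0..card VV}"
        then have "card {0..card VV} \<le> card VV"
          using card_inj_on_le[of g "{0..card VV}" VV] g insert(1) by auto
        then show False by simp
      qed
      then obtain t1 t2 where t: "t1 \<noteq> t2" "g t1 = g t2" unfolding inj_on_def by blast
      have "w \<in> g t1"
        using line_in_subspace[of "g t1" u "of_nat t1" w "of_nat t2"] g[of t1] g[of t2] t insert(4)
        unfolding f_def by auto
      then show False using w g by blast
    qed
  qed
qed

lemma ssum_Int_modular:
  assumes "csub X" "csub B" "csub H" "B \<subseteq> H"
  shows "ssum X B \<inter> H = ssum (X \<inter> H) B"
proof
  show "ssum (X \<inter> H) B \<subseteq> ssum X B \<inter> H"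
    using assms ssum_least[OF assms(3)] unfolding ssum_def by blast
  show "ssum X B \<inter> H \<subseteq> ssum (X \<inter> H) B"
  proof
    fix v assume v: "v \<in> ssum X B \<inter> H"
    then obtain x b where xb: "v = x + b" "x \<in> X" "b \<in> B" unfolding ssum_def by blast
    have "x = v - b" using xb by simp
    moreover have "v - b \<in> H"
      by (rule cs.subspace_diff) (use v xb assms in \<open>auto simp: csub_def\<close>)
    ultimately have "x \<in> X \<inter> H" using xb by simp
    then show "v \<in> ssum (X \<inter> H) B" using xb unfolding ssum_def by blast
  qed
qed

text \<open>General position: \<open>dim (U \<inter> H)\<close> is as small as \<open>B \<subseteq> U \<inter> H\<close> and \<open>U + H \<subseteq> W\<close> permit.\<close>
definition gen_pos :: "vect set \<Rightarrow> vect set \<Rightarrow> vect set set \<Rightarrow> vect set \<Rightarrow> bool" where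
  "gen_pos B W UU H \<longleftrightarrow> csub H \<and> B \<subseteq> H \<and> H \<subseteq> W \<and>
     (\<forall>U\<in>UU. cdim (U \<inter> H) = max (cdim B) (cdim U + cdim H - cdim W))"

context
  fixes N :: nat and B W :: "vect set" and UU :: "vect set set"
  assumes B: "csub B" and W: "csub W" and BW: "B \<subseteq> W" and WN: "W \<subseteq> Vsp N"
    and UUf: "finite UU" and UU: "\<And>U. U \<in> UU \<Longrightarrow> csub U \<and> B \<subseteq> U \<and> U \<subseteq> W"
begin

lemma gen_pos_bottom: "gen_pos B W UU B"
proof -
  have "cdim U \<le> cdim W" if "U \<in> UU" for U using UU[OF that] cdim_mono WN by blast
  moreover have "U \<inter> B = B" if "U \<in> UU" for U using UU[OF that] by blast
  moreover have "cdim B \<le> cdim W" using cdim_mono BW B WN by blast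
  ultimately show ?thesis unfolding gen_pos_def using B BW by fastforce
qed

lemma gen_pos_add_line:
  assumes H: "gen_pos B W UU H" and v: "v \<in> W" "v \<notin> H"
    and v_avoids: "\<And>U. U \<in> UU \<Longrightarrow> ssum U H \<noteq> W \<Longrightarrow> v \<notin> ssum U H"
  shows "gen_pos B W UU (ssum H (cs.span {v}))" "cdim (ssum H (cs.span {v})) = cdim H + 1"
proof -
  define H' where "H' = ssum H (cs.span {v})"
  have sH: "csub H" "B \<subseteq> H" "H \<subseteq> W" using H unfolding gen_pos_def by auto
  have HN: "H \<subseteq> Vsp N" using sH WN by auto
  have lineW: "cs.span {v} \<subseteq> W" using W v(1) by (intro cs.span_minimal) (auto simp: csub_def)
  have sH': "csub H'" unfolding H'_def using sH csub_span csub_ssum by blast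
  have HH': "H \<subseteq> H'" unfolding H'_def using ssum_upper1[OF csub_span] .
  have H'W: "H' \<subseteq> W" unfolding H'_def using ssum_least[OF W sH(3) lineW] .
  show dH': "cdim (ssum H (cs.span {v})) = cdim H + 1" using cdim_add_line[OF sH(1) HN v(2)] .
  have H'N: "H' \<subseteq> Vsp N" using H'W WN by auto
  have "cdim (U \<inter> H') = max (cdim B) (cdim U + cdim H' - cdim W)" if U: "U \<in> UU" for U
  proof -
    have sU: "csub U" "B \<subseteq> U" "U \<subseteq> W" using UU[OF U] by auto
    have UN: "U \<subseteq> Vsp N" using sU WN by auto
    have IH: "cdim (U \<inter> H) = max (cdim B) (cdim U + cdim H - cdim W)"
      using H U unfolding gen_pos_def by auto
    have g1: "cdim (ssum U H) + cdim (U \<inter> H) = cdim U + cdim H" using grassmann[OF sU(1) sH(1) UN HN] .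
    have g2: "cdim (ssum U H') + cdim (U \<inter> H') = cdim U + cdim H'" using grassmann[OF sU(1) sH' UN H'N] .
    have sUH: "csub (ssum U H)" "ssum U H \<subseteq> W" using sU sH W by (auto simp: csub_ssum ssum_least)
    show ?thesis
    proof (cases "ssum U H = W")
      case True
      have "ssum U H \<subseteq> ssum U H'" unfolding ssum_def using HH' by blast
      then have "ssum U H' = W" using True ssum_least[OF W sU(3) H'W] by auto
      moreover have "cdim B \<le> cdim (U \<inter> H')"
        using cdim_mono[of B "U \<inter> H'" N] B sU sH' HH' sH(2) H'N by blast
      ultimately show ?thesis using g2 by auto
    next
      case False
      have "cdim (ssum U H') = cdim (ssum U H) + 1"
        unfolding H'_def ssum_assoc using cdim_add_line[OF sUH(1) _ v_avoids[OF U False]] sUH(2) WN by auto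
      moreover have "cdim (ssum U H) < cdim W"
        using subspace_eq_if_cdim_le[OF sUH(1) sUH(2) WN] False by linarith
      ultimately show ?thesis using g1 g2 IH dH' H'_def by auto
    qed
  qed
  then show "gen_pos B W UU (ssum H (cs.span {v}))"
    unfolding gen_pos_def H'_def[symmetric] using sH' H'W HH' sH by auto
qed

text \<open>Add a line spanned by a vector outside \<open>H\<close> and outside every proper \<open>U + H\<close>.\<close>
lemma gen_pos_step:
  assumes H: "gen_pos B W UU H" and lt: "cdim H < cdim W"
  obtains H' where "gen_pos B W UU H'" "H \<subseteq> H'" "cdim H' = cdim H + 1"
proof -
  have sH: "csub H" "H \<subseteq> W" using H unfolding gen_pos_def by auto
  let ?VV = "insert H ((\<lambda>U. ssum U H) ` {U\<in>UU. ssum U H \<noteq> W})"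
  have "\<exists>w\<in>W. \<forall>V\<in>?VV. w \<notin> V"
  proof (rule proper_subspaces_not_cover[OF W])
    show "finite ?VV" using UUf by auto
    fix V assume "V \<in> ?VV"
    then show "csub V \<and> V \<subseteq> W \<and> V \<noteq> W"
    proof
      assume "V = H" then show ?thesis using sH lt by auto
    next
      assume "V \<in> (\<lambda>U. ssum U H) ` {U\<in>UU. ssum U H \<noteq> W}"
      then obtain U where "U \<in> UU" "V = ssum U H" "ssum U H \<noteq> W" by auto
      then show ?thesis using UU[of U] sH W by (auto simp: csub_ssum ssum_least)
    qed
  qed
  then obtain v where v: "v \<in> W" "v \<notin> H" "\<And>U. U \<in> UU \<Longrightarrow> ssum U H \<noteq> W \<Longrightarrow> v \<notin> ssum U H"
    by blast
  show ?thesis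
    using that gen_pos_add_line[OF H v] ssum_upper1[OF csub_span, of H] by blast
qed

lemma gen_pos_chain_exists:
  "\<exists>Hs. Hs 0 = B \<and> (\<forall>j < cdim W - cdim B. Hs j \<subseteq> Hs (Suc j)) \<and>
      (\<forall>j \<le> cdim W - cdim B. gen_pos B W UU (Hs j) \<and> cdim (Hs j) = cdim B + j)"
proof -
  have "k \<le> cdim W - cdim B \<Longrightarrow> \<exists>Hs. Hs 0 = B \<and> (\<forall>j<k. Hs j \<subseteq> Hs (Suc j)) \<and>
      (\<forall>j\<le>k. gen_pos B W UU (Hs j) \<and> cdim (Hs j) = cdim B + j)" for k
  proof (induct k)
    case 0
    then show ?case using gen_pos_bottom by (intro exI[of _ "\<lambda>_. B"]) auto
  next
    case (Suc k)
    then obtain Hs where Hs: "Hs 0 = B" "\<forall>j<k. Hs j \<subseteq> Hs (Suc j)"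
        "\<forall>j\<le>k. gen_pos B W UU (Hs j) \<and> cdim (Hs j) = cdim B + j" by auto
    have "cdim (Hs k) < cdim W" using Hs(3) Suc(2) by auto
    then obtain H' where H': "gen_pos B W UU H'" "Hs k \<subseteq> H'" "cdim H' = cdim (Hs k) + 1"
      using gen_pos_step Hs(3) by blast
    show ?case
      by (rule exI[of _ "Hs(Suc k := H')"]) (use Hs H' in \<open>auto simp: less_Suc_eq le_Suc_eq\<close>)
  qed
  then show ?thesis by blast
qed

end

lemma nat_max_diff_int: "int (max (b::nat) (a - w)) = max (int b) (int a - int w)"
  by (cases "w \<le> a") (auto simp: max_def of_nat_diff)

text \<open>By the modular law \<open>((U \<inter> W) + B) \<inter> H = (U \<inter> H) + B\<close> and Grassmann's formula.\<close>
lemma cdim_Int_gen_pos: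
  assumes U: "csub U" "U \<subseteq> Vsp N" and B: "csub B" and W: "csub W" "B \<subseteq> W" "W \<subseteq> Vsp N"
    and H: "csub H" "B \<subseteq> H" "H \<subseteq> W"
    and g: "cdim (ssum (U \<inter> W) B \<inter> H) = max (cdim B) (cdim (ssum (U \<inter> W) B) + cdim H - cdim W)"
  shows "int (cdim (U \<inter> H)) = int (cdim (U \<inter> B))
    + max 0 (int (cdim (U \<inter> W)) - int (cdim (U \<inter> B)) + int (cdim H) - int (cdim W))"
proof -
  let ?X = "U \<inter> W"
  have sX: "csub ?X" "?X \<subseteq> Vsp N" using U W csub_Int by auto
  have BN: "B \<subseteq> Vsp N" using W by auto
  have sXH: "csub (?X \<inter> H)" "?X \<inter> H \<subseteq> Vsp N" using sX H csub_Int by auto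
  have "U \<inter> H = ?X \<inter> H" using H by auto
  moreover have "?X \<inter> H \<inter> B = U \<inter> B" "?X \<inter> B = U \<inter> B" using H W by auto
  then have "cdim (ssum ?X B \<inter> H) + cdim (U \<inter> B) = cdim (?X \<inter> H) + cdim B"
    and "cdim (ssum ?X B) + cdim (U \<inter> B) = cdim ?X + cdim B"
    using grassmann[OF sXH(1) B sXH(2) BN] grassmann[OF sX(1) B sX(2) BN]
      ssum_Int_modular[OF sX(1) B H(1,2)] by simp_all
  moreover have "int (cdim (ssum ?X B \<inter> H)) = max (int (cdim B)) (int (cdim (ssum ?X B)) + int (cdim H) - int (cdim W))"
    using g nat_max_diff_int[of "cdim B" "cdim (ssum ?X B) + cdim H" "cdim W"] by simp
  ultimately show ?thesis by (simp add: max_def split: if_splits)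
qed

section \<open>Corner sums of matrices\<close>

definition corner :: "mat \<Rightarrow> nat \<Rightarrow> nat \<Rightarrow> nat" where
  "corner M i j = (\<Sum>k=1..i. \<Sum>l=1..j. M k l)"

definition rect :: "mat \<Rightarrow> nat \<Rightarrow> nat \<Rightarrow> nat \<Rightarrow> nat \<Rightarrow> nat" where
  "rect M i1 i2 j1 j2 = (\<Sum>k\<in>{i1<..i2}. \<Sum>l\<in>{j1<..j2}. M k l)"

definition supported :: "nat \<Rightarrow> mat \<Rightarrow> bool" where
  "supported n M \<longleftrightarrow> (\<forall>i j. M i j \<noteq> 0 \<longrightarrow> i \<in> {1..n} \<and> j \<in> {1..n})"

lemma corner_0 [simp]: "corner M 0 j = 0" "corner M i 0 = 0"
  by (simp_all add: corner_def)

lemma corner_Suc_row: "corner M (Suc i) j = corner M i j + (\<Sum>l=1..j. M (Suc i) l)"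
  by (simp add: corner_def)

lemma corner_Suc_col: "corner M i (Suc j) = corner M i j + (\<Sum>k=1..i. M k (Suc j))"
  by (simp add: corner_def sum.distrib)

lemma sum_split_greaterThanAtMost:
  fixes g :: "nat \<Rightarrow> 'a::comm_monoid_add"
  assumes "a \<le> b" "b \<le> c" shows "sum g {a<..c} = sum g {a<..b} + sum g {b<..c}"
proof -
  have "{a<..c} = {a<..b} \<union> {b<..c}" using assms by auto
  then show ?thesis by (simp add: sum.union_disjoint)
qed

lemma sum_split_atLeastAtMost:
  fixes g :: "nat \<Rightarrow> 'a::comm_monoid_add"
  assumes "a \<le> b" shows "sum g {1..b} = sum g {1..a} + sum g {a<..b}"
proof -
  have "{1..b} = {1..a} \<union> {a<..b}" using assms by auto
  moreover have "{1..a} \<inter> {a<..b} = {}" by auto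
  ultimately show ?thesis by (simp add: sum.union_disjoint)
qed

lemma rect_corner:
  assumes "i1 \<le> i2" "j1 \<le> j2"
  shows "int (rect M i1 i2 j1 j2) = int (corner M i2 j2) - corner M i1 j2 - corner M i2 j1 + corner M i1 j1"
proof -
  have cols: "corner M i j2 = corner M i j1 + (\<Sum>k=1..i. \<Sum>l\<in>{j1<..j2}. M k l)" for i
    unfolding corner_def sum_split_atLeastAtMost[OF assms(2)] by (simp add: sum.distrib)
  have rows: "(\<Sum>k=1..i2. f k) = (\<Sum>k=1..i1. f k) + (\<Sum>k\<in>{i1<..i2}. f k)" for f :: "nat \<Rightarrow> nat"
    using sum_split_atLeastAtMost[OF assms(1)] .
  show ?thesis
    using cols[of i2] cols[of i1] rows[of "\<lambda>k. \<Sum>l=1..j1. M k l"] rows[of "\<lambda>k. \<Sum>l\<in>{j1<..j2}. M k l"]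
    unfolding rect_def corner_def by simp
qed

lemma rect_row: "1 \<le> i \<Longrightarrow> rect M (i - 1) i j1 j2 = (\<Sum>j\<in>{j1<..j2}. M i j)"
proof -
  assume "1 \<le> i"
  then have "{i - 1<..i} = {i}" by auto
  then show ?thesis by (simp add: rect_def)
qed

lemma entry_corner:
  assumes "1 \<le> i" "1 \<le> j"
  shows "int (M i j) = int (corner M i j) - corner M (i - 1) j - corner M i (j - 1) + corner M (i - 1) (j - 1)"
proof -
  have "{j - 1<..j} = {j}" using assms by auto
  then show ?thesis using rect_corner[of "i - 1" i "j - 1" j M] rect_row[OF assms(1), of M "j - 1" j] by simp
qed

lemma entry_le_rect:
  assumes "i1 < k" "k \<le> i2" "j1 < l" "l \<le> j2" shows "M k l \<le> rect M i1 i2 j1 j2"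
proof -
  have "M k l \<le> (\<Sum>l\<in>{j1<..j2}. M k l)" by (rule member_le_sum) (use assms in auto)
  also have "\<dots> \<le> (\<Sum>k\<in>{i1<..i2}. \<Sum>l\<in>{j1<..j2}. M k l)"
    by (rule member_le_sum[where f = "\<lambda>k. \<Sum>l\<in>{j1<..j2}. M k l"]) (use assms in auto)
  finally show ?thesis by (simp add: rect_def)
qed

lemma rect_pos_obtain:
  assumes "rect M i1 i2 j1 j2 > 0"
  obtains k l where "i1 < k" "k \<le> i2" "j1 < l" "l \<le> j2" "M k l > 0"
proof -
  have "\<exists>k\<in>{i1<..i2}. \<exists>l\<in>{j1<..j2}. M k l > 0"
  proof (rule ccontr)
    assume "\<not> ?thesis"
    then have "rect M i1 i2 j1 j2 = 0" unfolding rect_def by (auto intro!: sum.neutral)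
    then show False using assms by simp
  qed
  then show ?thesis using that by auto
qed

lemma corner_unique:
  fixes d :: "nat \<Rightarrow> nat \<Rightarrow> int"
  assumes "\<And>j. d 0 j = 0" "\<And>i. d i 0 = 0"
    and "\<And>i j. 1 \<le> i \<Longrightarrow> i \<le> n \<Longrightarrow> 1 \<le> j \<Longrightarrow> j \<le> n \<Longrightarrow>
           int (M i j) = d i j - d (i - 1) j - d i (j - 1) + d (i - 1) (j - 1)"
  shows "i \<le> n \<Longrightarrow> j \<le> n \<Longrightarrow> d i j = int (corner M i j)"
proof (induct i arbitrary: j)
  case 0 then show ?case using assms by simp
next
  case (Suc i)
  show ?case using Suc(3)
  proof (induct j)
    case 0 then show ?case using assms by simp
  next
    case (Suc j)
    have "int (corner M (Suc i) (Suc j))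
        = int (corner M i (Suc j)) + int (corner M (Suc i) j) - int (corner M i j) + int (M (Suc i) (Suc j))"
      using entry_corner[of "Suc i" "Suc j" M] by simp
    also have "\<dots> = d i (Suc j) + d (Suc i) j - d i j + M (Suc i) (Suc j)"
      using Suc.prems \<open>Suc i \<le> n\<close> Suc.hyps \<open>\<And>j. i \<le> n \<Longrightarrow> j \<le> n \<Longrightarrow> d i j = int (corner M i j)\<close> by auto
    also have "\<dots> = d (Suc i) (Suc j)"
      using assms(3)[of "Suc i" "Suc j"] Suc.prems \<open>Suc i \<le> n\<close> by simp
    finally show ?case by simp
  qed
qed

lemma matrix_eq_if_corner_eq:
  assumes "supported n M" "supported n M'" "\<And>i j. i \<le> n \<Longrightarrow> j \<le> n \<Longrightarrow> corner M i j = corner M' i j"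
  shows "M = M'"
proof (intro ext)
  fix i j
  show "M i j = M' i j"
  proof (cases "i \<in> {1..n} \<and> j \<in> {1..n}")
    case True
    then have "int (M i j) = int (M' i j)"
      using entry_corner[of i j M] entry_corner[of i j M'] assms(3) by auto
    then show ?thesis by simp
  next
    case False
    then have "M i j = 0" "M' i j = 0" using assms(1,2) unfolding supported_def by blast+
    then show ?thesis by simp
  qed
qed

lemma ro_corner: "1 \<le> i \<Longrightarrow> int (ro n M i) = int (corner M i n) - corner M (i - 1) n"
  using corner_Suc_row[of M "i - 1" n] by (simp add: ro_def)

lemma co_corner: "1 \<le> j \<Longrightarrow> int (co n M j) = int (corner M n j) - corner M n (j - 1)"
  using corner_Suc_col[of M n "j - 1"] by (simp add: co_def)

lemma corner_ro: "corner M i n = (\<Sum>k=1..i. ro n M k)"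
  by (simp add: corner_def ro_def)

lemma corner_co: "corner M n j = (\<Sum>l=1..j. co n M l)"
  unfolding corner_def co_def by (rule sum.swap)

lemma corner_diagm: "corner (diagm lam) i j = (\<Sum>k=1..min i j. lam k)"
proof -
  have "corner (diagm lam) i j = (\<Sum>k=1..i. if k \<le> j then lam k else 0)"
    unfolding corner_def diagm_def by (rule sum.cong) (auto simp: sum.delta')
  also have "\<dots> = (\<Sum>k=1..min i j. lam k)"
    by (induct i) (auto simp: min_def not_less_eq_eq le_Suc_eq)
  finally show ?thesis .
qed

lemma Theta_supported: "A \<in> Theta n r \<Longrightarrow> supported n A"
  unfolding Theta_def supported_def by auto

lemma Lam_supp: "lam \<in> Lam n r \<Longrightarrow> lam j \<noteq> 0 \<Longrightarrow> j \<in> {1..n}"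
  unfolding Lam_def by auto

section \<open>Flags and their relative position\<close>

lemma flag_mono:
  assumes "is_flag n r lam F" "j \<le> i" "i \<le> n" shows "F j \<subseteq> F i"
  using assms(2,3)
proof (induct i)
  case 0 then show ?case by simp
next
  case (Suc i)
  show ?case
  proof (cases "j = Suc i")
    case False
    then have "F j \<subseteq> F i" using Suc by auto
    moreover have "F i \<subseteq> F (Suc i)" using assms(1) Suc(3) unfolding is_flag_def by force
    ultimately show ?thesis by blast
  qed simp
qed

lemma flag_csub: "is_flag n r lam F \<Longrightarrow> i \<le> n \<Longrightarrow> csub (F i)"
  using csub_zero unfolding is_flag_def by (cases "i = 0") auto

lemma flag_subset_Vsp: "is_flag n r lam F \<Longrightarrow> i \<le> n \<Longrightarrow> F i \<subseteq> Vsp r"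
  using flag_mono[of n r lam F i n] unfolding is_flag_def by simp

lemma flag_cdim:
  assumes "is_flag n r lam F" "i \<le> n" shows "cdim (F i) = (\<Sum>k=1..i. lam k)"
  using assms(2)
proof (induct i)
  case 0 then show ?case using assms(1) cdim_zero unfolding is_flag_def by simp
next
  case (Suc i)
  then show ?case using assms(1) unfolding is_flag_def by auto
qed

lemma flag_Int:
  assumes "is_flag n r lam G" "i \<le> n" "j \<le> n" shows "G i \<inter> G j = G (min i j)"
  using flag_mono[OF assms(1)] assms by (cases "i \<le> j") (auto simp: min_def Int_absorb1 Int_absorb2)

lemma flag_Int_top:
  assumes "is_flag n r a F" "is_flag n r b G" "j \<le> n"
  shows "F n \<inter> G j = G j" "G j \<inter> F n = G j"
  using assms flag_subset_Vsp[of n r b G j] unfolding is_flag_def by auto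

lemma cdim_empty: "cdim {} = 0"
  using cs.dim_eq_card_independent[OF cs.independent_empty] by (simp add: cdim_def)

lemma cdim_Int_zero: "cdim ({0} \<inter> X) = 0" "cdim (X \<inter> {0}) = 0"
  by (cases "0 \<in> X"; simp add: cdim_zero cdim_empty)+

lemma relpos_second_diff:
  assumes F: "is_flag n r a F" and G: "is_flag n r b G"
    and i: "1 \<le> i" "i \<le> n" and j: "1 \<le> j" "j \<le> n"
  shows "int (relpos n F G i j) = int (cdim (F i \<inter> G j)) - cdim (F i \<inter> G (j - 1))
           - cdim (F (i - 1) \<inter> G j) + cdim (F (i - 1) \<inter> G (j - 1))"
proof -
  have sF: "csub (F i)" "csub (F (i - 1))" "F i \<subseteq> Vsp r" "F (i - 1) \<subseteq> F i"
    using flag_csub[OF F] flag_subset_Vsp[OF F] flag_mono[OF F] i by auto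
  have sG: "csub (G j)" "csub (G (j - 1))" "G (j - 1) \<subseteq> G j"
    using flag_csub[OF G] flag_mono[OF G] j by auto
  let ?X = "F i \<inter> G (j - 1)" and ?Y = "F (i - 1) \<inter> G j"
  have sX: "csub ?X" "?X \<subseteq> Vsp r" and sY: "csub ?Y" "?Y \<subseteq> Vsp r"
    using sF sG csub_Int by auto
  have "?X \<inter> ?Y = F (i - 1) \<inter> G (j - 1)" using sF sG by auto
  then have g: "cdim (ssum ?X ?Y) + cdim (F (i - 1) \<inter> G (j - 1)) = cdim ?X + cdim ?Y"
    using grassmann[OF sX(1) sY(1) sX(2) sY(2)] by simp
  have le: "cdim (ssum ?X ?Y) \<le> cdim (F i \<inter> G j)"
  proof (rule cdim_mono)
    show "ssum ?X ?Y \<subseteq> F i \<inter> G j"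
      by (rule ssum_least[OF csub_Int[OF sF(1) sG(1)]]) (use sF sG in auto)
    show "csub (ssum ?X ?Y)" using sX sY csub_ssum by auto
    show "F i \<inter> G j \<subseteq> Vsp r" using sF by auto
  qed
  have "relpos n F G i j = cdim (F i \<inter> G j) - cdim (ssum ?X ?Y)"
    using i j unfolding relpos_def by simp
  then show ?thesis using g le by simp
qed

text \<open>The relative position is the matrix of second differences of the dimensions
  \<open>dim (F\<^sub>i \<inter> G\<^sub>j)\<close>, which are therefore its corner sums.\<close>
lemma cdim_Int_flags:
  assumes F: "is_flag n r a F" and G: "is_flag n r b G" and "i \<le> n" "j \<le> n"
  shows "cdim (F i \<inter> G j) = corner (relpos n F G) i j"
proof -
  have "int (cdim (F i \<inter> G j)) = int (corner (relpos n F G) i j)"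
  proof (rule corner_unique[where d = "\<lambda>i j. int (cdim (F i \<inter> G j))" and n = n])
    show "\<And>j. int (cdim (F 0 \<inter> G j)) = 0" "\<And>i. int (cdim (F i \<inter> G 0)) = 0"
      using F G cdim_Int_zero unfolding is_flag_def by simp_all
    show "\<And>i j. 1 \<le> i \<Longrightarrow> i \<le> n \<Longrightarrow> 1 \<le> j \<Longrightarrow> j \<le> n \<Longrightarrow> int (relpos n F G i j) =
       int (cdim (F i \<inter> G j)) - int (cdim (F (i - 1) \<inter> G j)) - int (cdim (F i \<inter> G (j - 1))) +
       int (cdim (F (i - 1) \<inter> G (j - 1)))"
      using relpos_second_diff[OF F G] by simp
  qed (use assms in auto)
  then show ?thesis by simp
qed

lemma relpos_supported: "supported n (relpos n F G)"
  unfolding supported_def relpos_def by auto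

lemma relpos_co:
  assumes F: "is_flag n r a F" and G: "is_flag n r b G" and b: "\<And>j. b j \<noteq> 0 \<Longrightarrow> j \<in> {1..n}"
  shows "co n (relpos n F G) = b"
proof
  fix j show "co n (relpos n F G) j = b j"
  proof (cases "j \<in> {1..n}")
    case True
    have "int (co n (relpos n F G) j) = int (corner (relpos n F G) n j) - corner (relpos n F G) n (j - 1)"
      using co_corner True by auto
    also have "\<dots> = int (cdim (G j)) - cdim (G (j - 1))"
      using cdim_Int_flags[OF F G, of n] flag_Int_top[OF F G] True by (metis diff_le_self le_trans order_refl atLeastAtMost_iff)
    also have "\<dots> = b j" using G True unfolding is_flag_def by auto
    finally show ?thesis by simp
  next
    case False
    then have "b j = 0" using b[of j] by blast
    then show ?thesis using False by (auto simp: co_def relpos_def)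
  qed
qed

lemma relpos_ro:
  assumes F: "is_flag n r a F" and G: "is_flag n r b G" and a: "\<And>j. a j \<noteq> 0 \<Longrightarrow> j \<in> {1..n}"
  shows "ro n (relpos n F G) = a"
proof
  fix i show "ro n (relpos n F G) i = a i"
  proof (cases "i \<in> {1..n}")
    case True
    have "int (ro n (relpos n F G) i) = int (corner (relpos n F G) i n) - corner (relpos n F G) (i - 1) n"
      using ro_corner True by auto
    also have "\<dots> = int (cdim (F i)) - cdim (F (i - 1))"
      using cdim_Int_flags[OF F G, of _ n] flag_Int_top[OF G F] True by (metis diff_le_self le_trans order_refl atLeastAtMost_iff)
    also have "\<dots> = a i" using F True unfolding is_flag_def by auto
    finally show ?thesis by simp
  next
    case False
    then have "a i = 0" using a[of i] by blast
    then show ?thesis using False by (auto simp: ro_def relpos_def)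
  qed
qed

lemma relpos_Theta:
  assumes F: "is_flag n r a F" and G: "is_flag n r b G"
  shows "relpos n F G \<in> Theta n r"
proof -
  have "corner (relpos n F G) n n = r"
    using cdim_Int_flags[OF F G, of n n] F G cdim_coord_space[of "{..<r}"]
    by (simp add: is_flag_def Vsp_eq_coord_space)
  then show ?thesis using relpos_supported[of n F G] unfolding Theta_def supported_def corner_def by auto
qed

lemma ps_0 [simp]: "ps p 0 = 0"
  by (simp add: ps_def)

lemma ps_Suc: "t < length p \<Longrightarrow> ps p (Suc t) = ps p t + p ! t"
  by (simp add: ps_def take_Suc_conv_app_nth)

lemma ps_le_Suc: "ps p t \<le> ps p (Suc t)"
  by (cases "t < length p") (auto simp: ps_Suc, simp add: ps_def)

lemma ps_mono: "t \<le> t' \<Longrightarrow> ps p t \<le> ps p t'"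
  by (induct t' rule: dec_induct) (auto intro: order_trans[OF _ ps_le_Suc])

lemma ps_less_Suc: "is_decomp n p \<Longrightarrow> t < length p \<Longrightarrow> ps p t < ps p (Suc t)"
  unfolding is_decomp_def by (simp add: ps_Suc)

lemma ps_length: "is_decomp n p \<Longrightarrow> ps p (length p) = n"
  by (simp add: ps_def is_decomp_def)

lemma ps_le: "is_decomp n p \<Longrightarrow> ps p t \<le> n"
  by (metis ps_def ps_length ps_mono nat_le_linear take_all)

lemma block_unique:
  assumes "t < length p" "t' < length p"
    "ps p t < j" "j \<le> ps p (Suc t)" "ps p t' < j" "j \<le> ps p (Suc t')"
  shows "t = t'"
  using ps_mono[of "Suc t" t' p] ps_mono[of "Suc t'" t p] assms by (cases "t < t'"; cases "t' < t") auto

definition block_of :: "nat list \<Rightarrow> nat \<Rightarrow> nat" where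
  "block_of p j = (THE t. t < length p \<and> ps p t < j \<and> j \<le> ps p (Suc t))"

lemma block_of_eq:
  assumes "t < length p" "ps p t < j" "j \<le> ps p (Suc t)"
  shows "block_of p j = t"
  unfolding block_of_def by (rule the_equality) (use assms block_unique in blast)+

lemma block_of:
  assumes "is_decomp n p" "1 \<le> j" "j \<le> n"
  shows "block_of p j < length p" "ps p (block_of p j) < j" "j \<le> ps p (Suc (block_of p j))"
proof -
  have "1 \<le> k \<Longrightarrow> j \<le> ps p k \<Longrightarrow> \<exists>t<k. ps p t < j \<and> j \<le> ps p (Suc t)" for k
  proof (induct k)
    case (Suc k)
    show ?case
    proof (cases "k \<ge> 1 \<and> j \<le> ps p k")
      case True then show ?thesis using Suc by (meson less_Suc_eq)
    next
      case False then show ?thesis using Suc(3) assms(2) by (intro exI[of _ k]) (cases k; auto)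
    qed
  qed simp
  moreover have "1 \<le> length p" using assms unfolding is_decomp_def by (cases p) auto
  ultimately obtain t where "t < length p" "ps p t < j" "j \<le> ps p (Suc t)"
    using assms ps_length by (metis order_less_le_trans)
  then show "block_of p j < length p" "ps p (block_of p j) < j" "j \<le> ps p (Suc (block_of p j))"
    using block_of_eq by auto
qed

lemma obtain_block:
  assumes "is_decomp n p" "0 < n" "j \<le> n"
  obtains t where "t < length p" "ps p t \<le> j" "j \<le> ps p (Suc t)"
proof (cases "j = 0")
  case True
  have "0 < length p" using assms unfolding is_decomp_def by (cases p) auto
  then show ?thesis using that[of 0] True by simp
next
  case False
  then show ?thesis using that block_of[OF assms(1) _ assms(3)] by (meson less_imp_le_nat less_one not_le)
qed

lemma sum_blocks:
  assumes "is_decomp n p"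
  shows "(\<Sum>j=1..n. f j) = (\<Sum>t<length p. \<Sum>j\<in>{ps p t<..ps p (Suc t)}. f j)"
proof -
  have "(\<Sum>j\<in>{0<..ps p k}. f j) = (\<Sum>t<k. \<Sum>j\<in>{ps p t<..ps p (Suc t)}. f j)" for k
  proof (induct k)
    case (Suc k)
    then show ?case
      using sum_split_greaterThanAtMost[of 0 "ps p k" "ps p (Suc k)" f] ps_le_Suc[of p k] by simp
  qed simp
  moreover have "{1..n} = {0<..ps p (length p)}" using ps_length[OF assms] by auto
  ultimately show ?thesis by simp
qed

section \<open>Column generic matrices\<close>

text \<open>The data that an orbit in \<open>e\<^sub>A o\<^sub>\<lambda>\<^sub>,\<^sub>p\<close> inherits from \<open>A\<close>: the corner sums ending at
  block boundaries \<open>ps p t\<close> and along the last row (equivalently, the column sums).\<close>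
definition same_block_data :: "nat \<Rightarrow> nat list \<Rightarrow> mat \<Rightarrow> mat \<Rightarrow> bool" where
  "same_block_data n p M M' \<longleftrightarrow>
     (\<forall>i\<le>n. \<forall>t\<le>length p. corner M i (ps p t) = corner M' i (ps p t)) \<and>
     (\<forall>j\<le>n. corner M n j = corner M' n j)"

text \<open>Within a block the corner sums of a column generic matrix are the smallest ones
  compatible with its block data.\<close>
definition corner_law :: "nat \<Rightarrow> nat list \<Rightarrow> mat \<Rightarrow> bool" where
  "corner_law n p M \<longleftrightarrow> (\<forall>t<length p. \<forall>i\<le>n. \<forall>j. ps p t \<le> j \<and> j \<le> ps p (Suc t) \<longrightarrow>
     int (corner M i j) = int (corner M i (ps p t)) + max 0 (int (corner M i (ps p (Suc t)))
        - int (corner M i (ps p t)) + int (corner M n j) - int (corner M n (ps p (Suc t)))))"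

lemma same_block_data_sym: "same_block_data n p M M' \<Longrightarrow> same_block_data n p M' M"
  unfolding same_block_data_def by auto

lemma same_block_data_trans:
  "same_block_data n p M M' \<Longrightarrow> same_block_data n p M' M'' \<Longrightarrow> same_block_data n p M M''"
  unfolding same_block_data_def by auto

lemma same_block_data_rect:
  assumes sd: "same_block_data n p M M'" and i: "1 \<le> i" "i \<le> n" and t: "t < length p"
  shows "rect M (i - 1) i (ps p t) (ps p (Suc t)) = rect M' (i - 1) i (ps p t) (ps p (Suc t))"
proof -
  have bd: "corner M a (ps p u) = corner M' a (ps p u)" if "a \<le> n" "u \<le> length p" for a u
    using sd that unfolding same_block_data_def by auto
  have "int (rect M (i - 1) i (ps p t) (ps p (Suc t))) = int (rect M' (i - 1) i (ps p t) (ps p (Suc t)))"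
    using rect_corner[of "i - 1" i "ps p t" "ps p (Suc t)"] ps_le_Suc[of p t] i t
      bd[of i t] bd[of "i - 1" t] bd[of i "Suc t"] bd[of "i - 1" "Suc t"] by simp
  then show ?thesis by simp
qed

lemma col_generic_entries:
  assumes "is_decomp n p" "col_generic n p M" "t < length p" "1 \<le> k1" "k1 < k2" "k2 \<le> n"
    "ps p t < l1" "l1 < l2" "l2 \<le> ps p (Suc t)"
  shows "M k1 l1 * M k2 l2 = 0"
proof -
  have "generic_sub {1..n} {ps p t + 1..ps p (Suc t)} M"
    using assms(2,3) unfolding col_generic_def by auto
  then show ?thesis
    unfolding generic_sub_def using assms(4-9) ps_le[OF assms(1), of "Suc t"] by auto
qed

text \<open>A column generic matrix has no two nonzero entries in the rectangles
  \<open>]0,i] \<times> ]ps p t,j]\<close> and \<open>]i,n] \<times> ]j,ps p (t+1)]\<close>, so one of them has sum zero.\<close>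
lemma col_generic_corner_law:
  assumes dec: "is_decomp n p" and cg: "col_generic n p M"
  shows "corner_law n p M"
  unfolding corner_law_def
proof (intro allI impI)
  fix t i j assume t: "t < length p" and i: "i \<le> n" and j: "ps p t \<le> j \<and> j \<le> ps p (Suc t)"
  let ?lo = "ps p t" and ?hi = "ps p (Suc t)"
  define P where "P = rect M 0 i ?lo j"
  define X where "X = rect M i n j ?hi"
  have P: "int P = int (corner M i j) - corner M i ?lo"
    unfolding P_def using rect_corner[of 0 i ?lo j M] j by simp
  have X: "int X = int (corner M n ?hi) - corner M i ?hi - corner M n j + corner M i j"
    unfolding X_def using rect_corner[of i n j ?hi M] j i by simp
  have "P = 0 \<or> X = 0"
  proof (rule ccontr)
    assume "\<not> ?thesis"
    then have "P > 0" "X > 0" by auto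
    obtain k1 l1 where a: "0 < k1" "k1 \<le> i" "?lo < l1" "l1 \<le> j" "M k1 l1 > 0"
      using \<open>P > 0\<close> unfolding P_def by (rule rect_pos_obtain)
    obtain k2 l2 where b: "i < k2" "k2 \<le> n" "j < l2" "l2 \<le> ?hi" "M k2 l2 > 0"
      using \<open>X > 0\<close> unfolding X_def by (rule rect_pos_obtain)
    have "M k1 l1 * M k2 l2 = 0" by (rule col_generic_entries[OF dec cg t]) (use a b in auto)
    then show False using a b by simp
  qed
  then show "int (corner M i j) = int (corner M i ?lo)
      + max 0 (int (corner M i ?hi) - int (corner M i ?lo) + int (corner M n j) - int (corner M n ?hi))"
    using P X by auto
qed

lemma corner_law_col_generic:
  assumes su: "supported n M" and cf: "corner_law n p M"
  shows "col_generic n p M"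
  unfolding col_generic_def generic_sub_def
proof (intro allI impI ballI)
  fix t i k s u
  assume t: "t < length p" and ik: "i \<in> {1..n}" "k \<in> {1..n}"
    and su': "s \<in> {ps p t + 1..ps p (Suc t)}" "u \<in> {ps p t + 1..ps p (Suc t)}" and lt: "i < k \<and> s < u"
  let ?lo = "ps p t" and ?hi = "ps p (Suc t)"
  show "M i s * M k u = 0"
  proof (rule ccontr)
    assume "M i s * M k u \<noteq> 0"
    then have pos: "M i s > 0" "M k u > 0" by auto
    define P where "P = rect M 0 i ?lo s"
    define X where "X = rect M i n s ?hi"
    have P: "int P = int (corner M i s) - corner M i ?lo"
      unfolding P_def using rect_corner[of 0 i ?lo s M] su' by simp
    have X: "int X = int (corner M n ?hi) - corner M i ?hi - corner M n s + corner M i s"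
      unfolding X_def using rect_corner[of i n s ?hi M] su' ik by simp
    have "M i s \<le> P" unfolding P_def by (rule entry_le_rect) (use ik su' in auto)
    moreover have "M k u \<le> X" unfolding X_def by (rule entry_le_rect) (use ik su' lt in auto)
    moreover have "int (corner M i s) = int (corner M i ?lo) + max 0 (int (corner M i ?hi)
        - int (corner M i ?lo) + int (corner M n s) - int (corner M n ?hi))"
      using cf[unfolded corner_law_def, rule_format, of t i s] t ik su' by auto
    then have "int P = max 0 (int P - int X)" using P X by (simp add: algebra_simps)
    ultimately show False using pos by (simp add: max_def split: if_splits)
  qed
qed

lemma col_generic_unique:
  assumes dec: "is_decomp n p" and n: "0 < n" and su: "supported n M" "supported n M'"
    and cg: "col_generic n p M" "col_generic n p M'" and sd: "same_block_data n p M M'"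
  shows "M = M'"
proof (rule matrix_eq_if_corner_eq[OF su])
  fix i j assume ij: "i \<le> n" "j \<le> n"
  obtain t where t: "t < length p" "ps p t \<le> j" "j \<le> ps p (Suc t)"
    using obtain_block[OF dec n ij(2)] by blast
  have "corner M i (ps p t) = corner M' i (ps p t)" "corner M i (ps p (Suc t)) = corner M' i (ps p (Suc t))"
    "corner M n j = corner M' n j" "corner M n (ps p (Suc t)) = corner M' n (ps p (Suc t))"
    using sd t ij ps_le[OF dec] unfolding same_block_data_def by auto
  moreover have "int (corner X i j) = int (corner X i (ps p t)) + max 0 (int (corner X i (ps p (Suc t)))
        - int (corner X i (ps p t)) + int (corner X n j) - int (corner X n (ps p (Suc t))))"
    if "col_generic n p X" for X
    using col_generic_corner_law[OF dec that] t ij unfolding corner_law_def by blast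
  ultimately have "int (corner M i j) = int (corner M' i j)" using cg by presburger
  then show "corner M i j = corner M' i j" by simp
qed

section \<open>The stabilizer dimension\<close>

lemma stabdim_corner: "stabdim n M = (\<Sum>i=1..n. \<Sum>j=1..n. M i j * corner M i j)"
  by (simp add: stabdim_def corner_def sum_distrib_left)

lemma corner_pred:
  assumes "1 \<le> i" "1 \<le> j"
  shows "corner M i j = corner M (i - 1) (j - 1) + (\<Sum>l=1..j. M i l) + (\<Sum>k=1..i - 1. M k j)"
  using assms corner_Suc_row[of M "i - 1" j] corner_Suc_col[of M "i - 1" "j - 1"] by simp

lemma sum_mult_partial_sums_le:
  fixes x :: "nat \<Rightarrow> nat"
  shows "2 * (\<Sum>j=1..m. x j * (\<Sum>l=1..j. x l)) = (\<Sum>j=1..m. x j)\<^sup>2 + (\<Sum>j=1..m. (x j)\<^sup>2)"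
  by (induct m) (simp_all add: power2_eq_square algebra_simps)

lemma sum_mult_partial_sums_less:
  fixes y :: "nat \<Rightarrow> nat"
  shows "2 * (\<Sum>i=1..m. y i * (\<Sum>k=1..i - 1. y k)) + (\<Sum>i=1..m. (y i)\<^sup>2) = (\<Sum>i=1..m. y i)\<^sup>2"
  by (induct m) (simp_all add: power2_eq_square algebra_simps)

lemma stabdim_formula:
  "2 * stabdim n M = (\<Sum>i=1..n. (ro n M i)\<^sup>2) + (\<Sum>j=1..n. (co n M j)\<^sup>2)
     + 2 * (\<Sum>i=1..n. \<Sum>j=1..n. M i j * corner M (i - 1) (j - 1))"
proof -
  define RT where "RT = (\<Sum>i=1..n. \<Sum>j=1..n. M i j * (\<Sum>l=1..j. M i l))"
  define CT where "CT = (\<Sum>i=1..n. \<Sum>j=1..n. M i j * (\<Sum>k=1..i - 1. M k j))"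
  define SQ where "SQ = (\<Sum>i=1..n. \<Sum>j=1..n. (M i j)\<^sup>2)"
  have "stabdim n M = (\<Sum>i=1..n. \<Sum>j=1..n. M i j * corner M (i - 1) (j - 1)
      + M i j * (\<Sum>l=1..j. M i l) + M i j * (\<Sum>k=1..i - 1. M k j))"
    unfolding stabdim_corner by (intro sum.cong refl) (simp add: corner_pred algebra_simps)
  then have st: "stabdim n M = (\<Sum>i=1..n. \<Sum>j=1..n. M i j * corner M (i - 1) (j - 1)) + RT + CT"
    unfolding RT_def CT_def by (simp add: sum.distrib)
  have "2 * RT = (\<Sum>i=1..n. 2 * (\<Sum>j=1..n. M i j * (\<Sum>l=1..j. M i l)))"
    unfolding RT_def by (simp add: sum_distrib_left)
  also have "\<dots> = (\<Sum>i=1..n. (ro n M i)\<^sup>2 + (\<Sum>j=1..n. (M i j)\<^sup>2))"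
    unfolding ro_def by (rule sum.cong[OF refl]) (rule sum_mult_partial_sums_le)
  finally have rt: "2 * RT = (\<Sum>i=1..n. (ro n M i)\<^sup>2) + SQ"
    unfolding SQ_def by (simp add: sum.distrib)
  have "CT = (\<Sum>j=1..n. \<Sum>i=1..n. M i j * (\<Sum>k=1..i - 1. M k j))"
    unfolding CT_def by (rule sum.swap)
  moreover have "SQ = (\<Sum>j=1..n. \<Sum>i=1..n. (M i j)\<^sup>2)"
    unfolding SQ_def by (rule sum.swap)
  ultimately have "2 * CT + SQ
      = (\<Sum>j=1..n. 2 * (\<Sum>i=1..n. M i j * (\<Sum>k=1..i - 1. M k j)) + (\<Sum>i=1..n. (M i j)\<^sup>2))"
    by (simp add: sum_distrib_left sum.distrib)
  also have "\<dots> = (\<Sum>j=1..n. (co n M j)\<^sup>2)"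
    unfolding co_def by (rule sum.cong[OF refl]) (rule sum_mult_partial_sums_less)
  finally show ?thesis using st rt by linarith
qed

text \<open>\<open>2 \<cdot> stabdim = stab_block_part + 2 \<cdot> stab_excess\<close>, where the first part depends only on
  the block data and the excess vanishes exactly on column generic matrices.\<close>
definition stab_block_part :: "nat \<Rightarrow> nat list \<Rightarrow> mat \<Rightarrow> nat" where
  "stab_block_part n p M = (\<Sum>i=1..n. (ro n M i)\<^sup>2) + (\<Sum>j=1..n. (co n M j)\<^sup>2) +
     2 * (\<Sum>i=1..n. \<Sum>t<length p. corner M (i - 1) (ps p t) * rect M (i - 1) i (ps p t) (ps p (Suc t)))"

definition stab_excess :: "nat \<Rightarrow> nat list \<Rightarrow> mat \<Rightarrow> nat" where
  "stab_excess n p M = (\<Sum>i=1..n. \<Sum>t<length p. \<Sum>j\<in>{ps p t<..ps p (Suc t)}.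
      M i j * rect M 0 (i - 1) (ps p t) (j - 1))"

lemma stabdim_decomp:
  assumes dec: "is_decomp n p"
  shows "2 * stabdim n M = stab_block_part n p M + 2 * stab_excess n p M"
proof -
  have split: "M i j * corner M (i - 1) (j - 1)
      = M i j * corner M (i - 1) (ps p t) + M i j * rect M 0 (i - 1) (ps p t) (j - 1)"
    if j: "j \<in> {ps p t<..ps p (Suc t)}" for i t j
  proof -
    have "int (rect M 0 (i - 1) (ps p t) (j - 1)) = int (corner M (i - 1) (j - 1)) - corner M (i - 1) (ps p t)"
      using rect_corner[of 0 "i - 1" "ps p t" "j - 1" M] j by (simp add: less_eq_Suc_le le_diff_conv2)
    then have "corner M (i - 1) (j - 1) = corner M (i - 1) (ps p t) + rect M 0 (i - 1) (ps p t) (j - 1)"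
      by linarith
    then show ?thesis by (simp add: algebra_simps)
  qed
  have row: "(\<Sum>j\<in>{ps p t<..ps p (Suc t)}. M i j * corner M (i - 1) (ps p t))
      = corner M (i - 1) (ps p t) * rect M (i - 1) i (ps p t) (ps p (Suc t))" if "i \<in> {1..n}" for i t
    using rect_row[of i M] that by (simp add: sum_distrib_left mult.commute)
  have "(\<Sum>i=1..n. \<Sum>j=1..n. M i j * corner M (i - 1) (j - 1))
      = (\<Sum>i=1..n. \<Sum>t<length p. \<Sum>j\<in>{ps p t<..ps p (Suc t)}. M i j * corner M (i - 1) (j - 1))"
    by (rule sum.cong[OF refl]) (rule sum_blocks[OF dec])
  also have "\<dots> = (\<Sum>i=1..n. \<Sum>t<length p. \<Sum>j\<in>{ps p t<..ps p (Suc t)}.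
      M i j * corner M (i - 1) (ps p t) + M i j * rect M 0 (i - 1) (ps p t) (j - 1))"
    by (intro sum.cong refl split)
  also have "\<dots> = (\<Sum>i=1..n. \<Sum>t<length p. \<Sum>j\<in>{ps p t<..ps p (Suc t)}. M i j * corner M (i - 1) (ps p t))
      + stab_excess n p M"
    unfolding stab_excess_def by (simp add: sum.distrib)
  also have "(\<Sum>i=1..n. \<Sum>t<length p. \<Sum>j\<in>{ps p t<..ps p (Suc t)}. M i j * corner M (i - 1) (ps p t))
      = (\<Sum>i=1..n. \<Sum>t<length p. corner M (i - 1) (ps p t) * rect M (i - 1) i (ps p t) (ps p (Suc t)))"
    by (intro sum.cong refl row)
  finally show ?thesis unfolding stabdim_formula stab_block_part_def by simp
qed

lemma stab_block_part_eq:
  assumes dec: "is_decomp n p" and sd: "same_block_data n p M M'"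
  shows "stab_block_part n p M = stab_block_part n p M'"
proof -
  have bd: "corner M a (ps p b) = corner M' a (ps p b)" if "a \<le> n" "b \<le> length p" for a b
    using sd that unfolding same_block_data_def by auto
  have r: "ro n M i = ro n M' i" if "i \<in> {1..n}" for i
  proof -
    have "i \<le> n" "i - 1 \<le> n" "1 \<le> i" using that by auto
    then show ?thesis
      using ro_corner[of i n M] ro_corner[of i n M'] bd[of i "length p"] bd[of "i - 1" "length p"]
      by (simp add: ps_length[OF dec])
  qed
  have c: "co n M j = co n M' j" if "j \<in> {1..n}" for j
    using co_corner[of j n M] co_corner[of j n M'] sd that unfolding same_block_data_def by auto
  have "(\<Sum>i=1..n. (ro n M i)\<^sup>2) = (\<Sum>i=1..n. (ro n M' i)\<^sup>2)"
    and "(\<Sum>j=1..n. (co n M j)\<^sup>2) = (\<Sum>j=1..n. (co n M' j)\<^sup>2)"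
    using r c by (auto intro: sum.cong)
  moreover have "corner M (i - 1) (ps p t) * rect M (i - 1) i (ps p t) (ps p (Suc t))
      = corner M' (i - 1) (ps p t) * rect M' (i - 1) i (ps p t) (ps p (Suc t))"
    if "i \<in> {1..n}" "t \<in> {..<length p}" for i t
    using same_block_data_rect[OF sd, of i t] bd[of "i - 1" t] that by force
  ultimately show ?thesis
    unfolding stab_block_part_def by (metis (no_types, lifting) sum.cong)
qed

lemma stab_excess_col_generic:
  assumes dec: "is_decomp n p" and cg: "col_generic n p M"
  shows "stab_excess n p M = 0"
  unfolding stab_excess_def
proof (intro sum.neutral ballI)
  fix i t j assume i: "i \<in> {1..n}" and t: "t \<in> {..<length p}" and j: "j \<in> {ps p t<..ps p (Suc t)}"
  show "M i j * rect M 0 (i - 1) (ps p t) (j - 1) = 0"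
  proof (rule ccontr)
    assume "\<not> ?thesis"
    then have "M i j > 0" "rect M 0 (i - 1) (ps p t) (j - 1) > 0" by auto
    then obtain k l where kl: "0 < k" "k \<le> i - 1" "ps p t < l" "l \<le> j - 1" "M k l > 0"
      by (blast elim: rect_pos_obtain)
    have "M k l * M i j = 0" by (rule col_generic_entries[OF dec cg]) (use t kl i j in auto)
    then show False using kl \<open>M i j > 0\<close> by simp
  qed
qed

lemma stab_excess_pos:
  assumes ncg: "\<not> col_generic n p M"
  shows "stab_excess n p M > 0"
proof -
  obtain t i k s u where t: "t < length p" and ik: "i \<in> {1..n}" "k \<in> {1..n}"
    and su: "s \<in> {ps p t + 1..ps p (Suc t)}" "u \<in> {ps p t + 1..ps p (Suc t)}"
    and lt: "i < k" "s < u" and nz: "M i s * M k u \<noteq> 0"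
    using ncg unfolding col_generic_def generic_sub_def by blast
  let ?f = "\<lambda>j. M k j * rect M 0 (k - 1) (ps p t) (j - 1)"
  have "M i s \<le> rect M 0 (k - 1) (ps p t) (u - 1)" by (rule entry_le_rect) (use ik su lt in auto)
  then have "0 < ?f u" using nz by (metis mult_is_0 mult_le_mono2 neq0_conv not_le)
  also have "\<dots> \<le> (\<Sum>j\<in>{ps p t<..ps p (Suc t)}. ?f j)"
    by (rule member_le_sum) (use su in auto)
  also have "\<dots> \<le> (\<Sum>t<length p. \<Sum>j\<in>{ps p t<..ps p (Suc t)}. M k j * rect M 0 (k - 1) (ps p t) (j - 1))"
    by (rule member_le_sum[where f = "\<lambda>t. \<Sum>j\<in>{ps p t<..ps p (Suc t)}. M k j * rect M 0 (k - 1) (ps p t) (j - 1)"])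
       (use t in auto)
  also have "\<dots> \<le> stab_excess n p M"
    unfolding stab_excess_def
    by (rule member_le_sum[where f = "\<lambda>k. \<Sum>t<length p. \<Sum>j\<in>{ps p t<..ps p (Suc t)}. M k j * rect M 0 (k - 1) (ps p t) (j - 1)"])
       (use ik in auto)
  finally show ?thesis .
qed

theorem stabdim_col_generic_less:
  assumes dec: "is_decomp n p" and n: "0 < n" and su: "supported n M" "supported n M'"
    and cg: "col_generic n p M" and sd: "same_block_data n p M M'" and ne: "M \<noteq> M'"
  shows "stabdim n M < stabdim n M'"
proof -
  have "\<not> col_generic n p M'" using col_generic_unique[OF dec n su cg _ sd] ne by blast
  then have "stab_excess n p M' > 0" by (rule stab_excess_pos)
  moreover have "stab_excess n p M = 0" using stab_excess_col_generic dec cg by blast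
  moreover have "stab_block_part n p M = stab_block_part n p M'" using stab_block_part_eq dec sd by blast
  ultimately show ?thesis using stabdim_decomp[OF dec, of M] stabdim_decomp[OF dec, of M'] by linarith
qed

section \<open>Coordinate flags in a given relative position\<close>

lemma labelling_exists:
  assumes "finite X"
  shows "\<exists>f::nat \<Rightarrow> 'a. (\<forall>k < sum w X. f k \<in> X) \<and> (\<forall>x\<in>X. card {k. k < sum w X \<and> f k = x} = w x)"
  using assms
proof (induct X rule: finite_induct)
  case (insert x X)
  then obtain f where f: "\<forall>k < sum w X. f k \<in> X" "\<forall>y\<in>X. card {k. k < sum w X \<and> f k = y} = w y" by blast
  define g where "g k = (if k < sum w X then f k else x)" for k
  have s: "sum w (insert x X) = sum w X + w x" using insert by simp
  have "\<forall>k < sum w (insert x X). g k \<in> insert x X" using f unfolding g_def by auto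
  moreover have "card {k. k < sum w (insert x X) \<and> g k = y} = w y" if y: "y \<in> insert x X" for y
  proof (cases "y = x")
    case True
    have "{k. k < sum w (insert x X) \<and> g k = y} = {sum w X..<sum w X + w x}"
      using f insert(2) True s unfolding g_def by (auto, metis not_le)
    then show ?thesis using True by simp
  next
    case False
    then have "{k. k < sum w (insert x X) \<and> g k = y} = {k. k < sum w X \<and> f k = y}"
      using s unfolding g_def by auto
    then show ?thesis using f False y by auto
  qed
  ultimately show ?case by blast
qed simp

text \<open>Basis vector \<open>k < r\<close> is assigned a cell \<open>(i, j)\<close>, each cell receiving \<open>A i j\<close> vectors; the
  coordinate flags spanned by the vectors with row (column) label at most \<open>i\<close> are in position \<open>A\<close>.\<close>
definition cell_label :: "nat \<Rightarrow> nat \<Rightarrow> mat \<Rightarrow> nat \<Rightarrow> nat \<times> nat" where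
  "cell_label n r A = (SOME f. (\<forall>k < r. f k \<in> {1..n} \<times> {1..n}) \<and>
      (\<forall>x\<in>{1..n} \<times> {1..n}. card {k. k < r \<and> f k = x} = A (fst x) (snd x)))"

definition row_flag :: "nat \<Rightarrow> nat \<Rightarrow> mat \<Rightarrow> nat \<Rightarrow> vect set" where
  "row_flag n r A i = coord_space {k. k < r \<and> fst (cell_label n r A k) \<le> i}"

definition col_flag :: "nat \<Rightarrow> nat \<Rightarrow> mat \<Rightarrow> nat \<Rightarrow> vect set" where
  "col_flag n r A j = coord_space {k. k < r \<and> snd (cell_label n r A k) \<le> j}"

lemma row_flag_subset_Vsp: "row_flag n r A i \<subseteq> Vsp r"
  and col_flag_subset_Vsp: "col_flag n r A j \<subseteq> Vsp r"
  unfolding row_flag_def col_flag_def Vsp_eq_coord_space by (rule coord_space_mono; auto)+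

context
  fixes n r :: nat and A :: mat
  assumes A: "A \<in> Theta n r"
begin

lemma cell_label:
  "\<forall>k < r. cell_label n r A k \<in> {1..n} \<times> {1..n}"
  "\<forall>x\<in>{1..n} \<times> {1..n}. card {k. k < r \<and> cell_label n r A k = x} = A (fst x) (snd x)"
proof -
  have "(\<Sum>x\<in>{1..n} \<times> {1..n}. A (fst x) (snd x)) = r"
    using A unfolding Theta_def by (simp add: sum.cartesian_product split_def)
  then have "\<exists>f. (\<forall>k < r. f k \<in> {1..n} \<times> {1..n}) \<and>
      (\<forall>x\<in>{1..n} \<times> {1..n}. card {k. k < r \<and> f k = x} = A (fst x) (snd x))"
    using labelling_exists[of "{1..n} \<times> {1..n}" "\<lambda>x. A (fst x) (snd x)"] by simp
  then have "(\<forall>k < r. cell_label n r A k \<in> {1..n} \<times> {1..n}) \<and>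
      (\<forall>x\<in>{1..n} \<times> {1..n}. card {k. k < r \<and> cell_label n r A k = x} = A (fst x) (snd x))"
    unfolding cell_label_def by (rule someI_ex)
  then show "\<forall>k < r. cell_label n r A k \<in> {1..n} \<times> {1..n}"
    "\<forall>x\<in>{1..n} \<times> {1..n}. card {k. k < r \<and> cell_label n r A k = x} = A (fst x) (snd x)"
    by auto
qed

lemma card_cell_label_le:
  assumes "i \<le> n" "j \<le> n"
  shows "card {k. k < r \<and> fst (cell_label n r A k) \<le> i \<and> snd (cell_label n r A k) \<le> j} = corner A i j"
proof -
  let ?l = "cell_label n r A"
  have "{k. k < r \<and> fst (?l k) \<le> i \<and> snd (?l k) \<le> j} = (\<Union>x\<in>{1..i}\<times>{1..j}. {k. k < r \<and> ?l k = x})"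
    using cell_label(1) by fastforce
  moreover have "card (\<Union>x\<in>{1..i}\<times>{1..j}. {k. k < r \<and> ?l k = x})
      = (\<Sum>x\<in>{1..i}\<times>{1..j}. card {k. k < r \<and> ?l k = x})"
    by (rule card_UN_disjoint) auto
  moreover have "\<dots> = (\<Sum>x\<in>{1..i}\<times>{1..j}. A (fst x) (snd x))"
    by (rule sum.cong[OF refl]) (use cell_label(2) assms in auto)
  ultimately show ?thesis unfolding corner_def by (simp add: sum.cartesian_product split_def)
qed

lemma cdim_row_flag_Int_col_flag:
  "i \<le> n \<Longrightarrow> j \<le> n \<Longrightarrow> cdim (row_flag n r A i \<inter> col_flag n r A j) = corner A i j"
proof -
  assume "i \<le> n" "j \<le> n"
  have "row_flag n r A i \<inter> col_flag n r A j
      = coord_space {k. k < r \<and> fst (cell_label n r A k) \<le> i \<and> snd (cell_label n r A k) \<le> j}"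
    unfolding row_flag_def col_flag_def coord_space_Int by (rule arg_cong[where f = coord_space]) auto
  then show ?thesis using card_cell_label_le[OF \<open>i \<le> n\<close> \<open>j \<le> n\<close>] by (simp add: cdim_coord_space)
qed

lemma row_flag_top: "row_flag n r A n = Vsp r" and col_flag_top: "col_flag n r A n = Vsp r"
  and row_flag_0: "row_flag n r A 0 = {0}" and col_flag_0: "col_flag n r A 0 = {0}"
  using cell_label(1) unfolding row_flag_def col_flag_def Vsp_eq_coord_space zero_eq_coord_space
  by (intro arg_cong[where f = coord_space]; fastforce)+

lemma row_flag_is_flag: "is_flag n r (ro n A) (row_flag n r A)"
proof -
  have d: "cdim (row_flag n r A i) = corner A i n" if "i \<le> n" for i
    using cdim_row_flag_Int_col_flag[OF that order_refl] col_flag_top row_flag_subset_Vsp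
    by (simp add: Int_absorb2)
  have "cdim (row_flag n r A i) = cdim (row_flag n r A (i - 1)) + ro n A i" if "i \<in> {1..n}" for i
  proof -
    have "i - 1 \<le> n" "i \<le> n" using that by auto
    then show ?thesis using d[of i] d[of "i - 1"] that corner_Suc_row[of A "i - 1" n] by (simp add: ro_def)
  qed
  moreover have "row_flag n r A (i - 1) \<subseteq> row_flag n r A i" for i
    unfolding row_flag_def by (rule coord_space_mono) auto
  ultimately show ?thesis
    unfolding is_flag_def using row_flag_0 row_flag_top by (auto simp: row_flag_def csub_coord_space)
qed

lemma col_flag_is_flag: "is_flag n r (co n A) (col_flag n r A)"
proof -
  have d: "cdim (col_flag n r A j) = corner A n j" if "j \<le> n" for j
    using cdim_row_flag_Int_col_flag[OF order_refl that] row_flag_top col_flag_subset_Vsp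
    by (simp add: Int_absorb1)
  have "cdim (col_flag n r A j) = cdim (col_flag n r A (j - 1)) + co n A j" if "j \<in> {1..n}" for j
  proof -
    have "j - 1 \<le> n" "j \<le> n" using that by auto
    then show ?thesis using d[of j] d[of "j - 1"] that corner_Suc_col[of A n "j - 1"] by (simp add: co_def)
  qed
  moreover have "col_flag n r A (j - 1) \<subseteq> col_flag n r A j" for j
    unfolding col_flag_def by (rule coord_space_mono) auto
  ultimately show ?thesis
    unfolding is_flag_def using col_flag_0 col_flag_top by (auto simp: col_flag_def csub_coord_space)
qed

lemma relpos_row_col_flag: "relpos n (row_flag n r A) (col_flag n r A) = A"
proof (rule matrix_eq_if_corner_eq[OF relpos_supported Theta_supported[OF A]])
  fix i j assume "i \<le> n" "j \<le> n"
  then show "corner (relpos n (row_flag n r A) (col_flag n r A)) i j = corner A i j"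
    using cdim_Int_flags[OF row_flag_is_flag col_flag_is_flag] cdim_row_flag_Int_col_flag by metis
qed

end

section \<open>Generic refinement of a flag inside blocks\<close>

definition block_spaces :: "(nat \<Rightarrow> vect set) \<Rightarrow> nat list \<Rightarrow> vect set set \<Rightarrow> nat \<Rightarrow> vect set set" where
  "block_spaces G p XX t = (\<lambda>U. ssum (U \<inter> G (ps p (Suc t))) (G (ps p t))) ` XX"

definition block_chain ::
    "(nat \<Rightarrow> vect set) \<Rightarrow> nat list \<Rightarrow> vect set set \<Rightarrow> nat \<Rightarrow> (nat \<Rightarrow> vect set) \<Rightarrow> bool" where
  "block_chain G p XX t Hs \<longleftrightarrow> (let lo = G (ps p t); hi = G (ps p (Suc t)) in
     Hs 0 = lo \<and> (\<forall>j < cdim hi - cdim lo. Hs j \<subseteq> Hs (Suc j)) \<and>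
     (\<forall>j \<le> cdim hi - cdim lo. gen_pos lo hi (block_spaces G p XX t) (Hs j) \<and> cdim (Hs j) = cdim lo + j))"

definition refine :: "(nat \<Rightarrow> vect set) \<Rightarrow> nat list \<Rightarrow> (nat \<Rightarrow> nat \<Rightarrow> vect set) \<Rightarrow> nat \<Rightarrow> vect set" where
  "refine G p Hs j = (if j = 0 then G 0
     else Hs (block_of p j) (cdim (G j) - cdim (G (ps p (block_of p j)))))"

context
  fixes n r :: nat and lam :: comp and G :: "nat \<Rightarrow> vect set" and p :: "nat list" and XX :: "vect set set"
  assumes G: "is_flag n r lam G" and dec: "is_decomp n p" and XX: "\<And>U. U \<in> XX \<Longrightarrow> csub U"
begin

lemma block_bounds:
  assumes "t < length p"
  shows "csub (G (ps p t))" "csub (G (ps p (Suc t)))" "G (ps p t) \<subseteq> G (ps p (Suc t))"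
    "G (ps p (Suc t)) \<subseteq> Vsp r" "cdim (G (ps p t)) \<le> cdim (G (ps p (Suc t)))"
proof -
  have le: "ps p t \<le> ps p (Suc t)" "ps p (Suc t) \<le> n" using ps_le_Suc ps_le[OF dec] by auto
  show "csub (G (ps p t))" "csub (G (ps p (Suc t)))" "G (ps p (Suc t)) \<subseteq> Vsp r"
    using flag_csub[OF G] flag_subset_Vsp[OF G] le by auto
  show "G (ps p t) \<subseteq> G (ps p (Suc t))" using flag_mono[OF G] le by auto
  then show "cdim (G (ps p t)) \<le> cdim (G (ps p (Suc t)))"
    using cdim_mono \<open>csub (G (ps p t))\<close> \<open>G (ps p (Suc t)) \<subseteq> Vsp r\<close> by blast
qed

lemma block_spaces_between:
  assumes "t < length p" "U' \<in> block_spaces G p XX t"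
  shows "csub U' \<and> G (ps p t) \<subseteq> U' \<and> U' \<subseteq> G (ps p (Suc t))"
proof -
  obtain U where U: "U \<in> XX" "U' = ssum (U \<inter> G (ps p (Suc t))) (G (ps p t))"
    using assms(2) unfolding block_spaces_def by auto
  note b = block_bounds[OF assms(1)]
  have c: "csub (U \<inter> G (ps p (Suc t)))" using XX[OF U(1)] b csub_Int by blast
  have "csub U'" using U(2) c b csub_ssum by blast
  moreover have "G (ps p t) \<subseteq> U'" using U(2) ssum_upper2[OF c] by blast
  moreover have "U' \<subseteq> G (ps p (Suc t))" unfolding U(2) by (rule ssum_least) (use b in auto)
  ultimately show ?thesis by blast
qed

lemma block_chain_exists:
  assumes XXf: "finite XX" and t: "t < length p"
  shows "\<exists>Hs. block_chain G p XX t Hs"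
  unfolding block_chain_def Let_def
  by (rule gen_pos_chain_exists[OF block_bounds(1-4)[OF t]])
     (use XXf block_spaces_between[OF t] in \<open>auto simp: block_spaces_def\<close>)

lemma flag_cdim_mono: "j1 \<le> j2 \<Longrightarrow> j2 \<le> n \<Longrightarrow> cdim (G j1) \<le> cdim (G j2)"
  using flag_cdim[OF G] by (simp add: sum_mono2)

context
  fixes Hs :: "nat \<Rightarrow> nat \<Rightarrow> vect set"
  assumes chain: "\<And>t. t < length p \<Longrightarrow> block_chain G p XX t (Hs t)"
begin

lemma chain_bottom: "t < length p \<Longrightarrow> Hs t 0 = G (ps p t)"
  using chain unfolding block_chain_def Let_def by blast

lemma chain_gen_pos:
  assumes t: "t < length p" and j: "j \<le> cdim (G (ps p (Suc t))) - cdim (G (ps p t))"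
  shows "csub (Hs t j)" "G (ps p t) \<subseteq> Hs t j" "Hs t j \<subseteq> G (ps p (Suc t))"
    "cdim (Hs t j) = cdim (G (ps p t)) + j"
    "\<And>U. U \<in> block_spaces G p XX t \<Longrightarrow>
      cdim (U \<inter> Hs t j) = max (cdim (G (ps p t))) (cdim U + cdim (Hs t j) - cdim (G (ps p (Suc t))))"
  using chain[OF t] j unfolding block_chain_def Let_def gen_pos_def by auto

lemma chain_mono:
  assumes t: "t < length p" and "j1 \<le> j2" "j2 \<le> cdim (G (ps p (Suc t))) - cdim (G (ps p t))"
  shows "Hs t j1 \<subseteq> Hs t j2"
  using assms(2,3)
proof (induct j2)
  case (Suc j2)
  show ?case
  proof (cases "j1 = Suc j2")
    case False
    then have "Hs t j1 \<subseteq> Hs t j2" using Suc by auto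
    moreover have "Hs t j2 \<subseteq> Hs t (Suc j2)"
      using chain[OF t] Suc(3) unfolding block_chain_def Let_def by auto
    ultimately show ?thesis by blast
  qed simp
qed simp

lemma chain_top:
  assumes t: "t < length p"
  shows "Hs t (cdim (G (ps p (Suc t))) - cdim (G (ps p t))) = G (ps p (Suc t))"
  using chain_gen_pos[OF t order_refl] block_bounds[OF t]
  by (intro subspace_eq_if_cdim_le) auto

lemma refine_block:
  assumes t: "t < length p" and j: "ps p t \<le> j" "j \<le> ps p (Suc t)"
  shows "refine G p Hs j = Hs t (cdim (G j) - cdim (G (ps p t)))"
proof (cases "ps p t < j")
  case True
  then show ?thesis using block_of_eq[OF t True j(2)] unfolding refine_def by auto
next
  case False
  then have jt: "j = ps p t" using j by simp
  show ?thesis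
  proof (cases t)
    case 0
    then show ?thesis using jt chain_bottom[OF t] unfolding refine_def by simp
  next
    case (Suc t')
    have t': "t' < length p" using t Suc by simp
    have pos: "ps p t' < ps p t" using ps_less_Suc[OF dec t'] Suc by simp
    then have "block_of p j = t'" using block_of_eq[OF t'] jt Suc by simp
    then have "refine G p Hs j = Hs t' (cdim (G (ps p (Suc t'))) - cdim (G (ps p t')))"
      unfolding refine_def using jt Suc pos by simp
    also have "\<dots> = G j" using chain_top[OF t'] jt Suc by simp
    also have "\<dots> = Hs t (cdim (G j) - cdim (G (ps p t)))" using chain_bottom[OF t] jt by simp
    finally show ?thesis .
  qed
qed

lemma refine_block_gen_pos:
  assumes t: "t < length p" and j: "ps p t \<le> j" "j \<le> ps p (Suc t)"
  shows "cdim (G j) - cdim (G (ps p t)) \<le> cdim (G (ps p (Suc t))) - cdim (G (ps p t))"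
    "cdim (refine G p Hs j) = cdim (G j)"
proof -
  have hn: "ps p (Suc t) \<le> n" using ps_le[OF dec] by blast
  show k: "cdim (G j) - cdim (G (ps p t)) \<le> cdim (G (ps p (Suc t))) - cdim (G (ps p t))"
    using flag_cdim_mono[OF j(2) hn] by simp
  show "cdim (refine G p Hs j) = cdim (G j)"
    using refine_block[OF assms] chain_gen_pos(4)[OF t k] flag_cdim_mono[OF j(1)] j hn by simp
qed

lemma refine_boundary: "t \<le> length p \<Longrightarrow> refine G p Hs (ps p t) = G (ps p t)"
proof (cases "t < length p")
  case True
  then show ?thesis using refine_block[OF True order_refl ps_le_Suc] chain_bottom[OF True] by simp
next
  case False
  assume "t \<le> length p"
  then have tl: "t = length p" using False by simp
  show ?thesis
  proof (cases "length p")
    case 0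
    then show ?thesis using tl by (simp add: refine_def)
  next
    case (Suc t')
    then show ?thesis using tl refine_block[of t' "ps p (Suc t')"] ps_le_Suc chain_top by simp
  qed
qed

lemma refine_is_flag: "is_flag n r lam (refine G p Hs)"
  unfolding is_flag_def
proof (intro conjI ballI)
  show "refine G p Hs 0 = {0}" using G unfolding refine_def is_flag_def by simp
  show "refine G p Hs n = Vsp r"
    using refine_boundary[of "length p"] ps_length[OF dec] G unfolding is_flag_def by simp
  fix i assume i: "i \<in> {1..n}"
  note t = block_of[OF dec, of i]
  let ?t = "block_of p i"
  have k1: "cdim (G i) - cdim (G (ps p ?t)) \<le> cdim (G (ps p (Suc ?t))) - cdim (G (ps p ?t))"
    using refine_block_gen_pos(1)[of ?t i] t i by simp
  have k0: "cdim (G (i - 1)) - cdim (G (ps p ?t)) \<le> cdim (G i) - cdim (G (ps p ?t))"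
    using flag_cdim_mono[of "i - 1" i] i by auto
  show "csub (refine G p Hs i)" using refine_block[of ?t i] t i chain_gen_pos(1)[OF _ k1] by simp
  show "refine G p Hs (i - 1) \<subseteq> refine G p Hs i"
    using refine_block[of ?t i] refine_block[of ?t "i - 1"] t i chain_mono[OF _ k0 k1] by simp
  have "cdim (refine G p Hs j) = cdim (G j)" if "j \<le> n" for j
  proof (cases "j = 0")
    case False
    then have "1 \<le> j" by simp
    then show ?thesis
      using block_of[OF dec _ that] refine_block_gen_pos(2)[of "block_of p j" j] by simp
  qed (simp add: refine_def)
  then show "cdim (refine G p Hs i) = cdim (refine G p Hs (i - 1)) + lam i"
    using i G unfolding is_flag_def by auto
qed

lemma cdim_Int_refine:
  assumes U: "U \<in> XX" "U \<subseteq> Vsp r" and t: "t < length p" and j: "ps p t \<le> j" "j \<le> ps p (Suc t)"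
  shows "int (cdim (U \<inter> refine G p Hs j)) = int (cdim (U \<inter> G (ps p t))) +
     max 0 (int (cdim (U \<inter> G (ps p (Suc t)))) - int (cdim (U \<inter> G (ps p t)))
       + int (cdim (refine G p Hs j)) - int (cdim (G (ps p (Suc t)))))"
proof -
  note b = block_bounds[OF t]
  have k: "cdim (G j) - cdim (G (ps p t)) \<le> cdim (G (ps p (Suc t))) - cdim (G (ps p t))"
    using refine_block_gen_pos(1)[OF t j] .
  note h = chain_gen_pos[OF t k]
  have eq: "refine G p Hs j = Hs t (cdim (G j) - cdim (G (ps p t)))" using refine_block[OF t j] .
  have "ssum (U \<inter> G (ps p (Suc t))) (G (ps p t)) \<in> block_spaces G p XX t"
    using U unfolding block_spaces_def by blast
  then show ?thesis
    by (intro cdim_Int_gen_pos[OF _ U(2) b(1-4)]) (use XX[OF U(1)] h eq in auto)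
qed

end

end

lemma generic_refinement_exists:
  assumes G: "is_flag n r lam G" and dec: "is_decomp n p"
    and XXf: "finite XX" and XX: "\<And>U. U \<in> XX \<Longrightarrow> csub U \<and> U \<subseteq> Vsp r"
  obtains H where "is_flag n r lam H" "\<And>t. t \<le> length p \<Longrightarrow> H (ps p t) = G (ps p t)"
    "\<And>U t j. U \<in> XX \<Longrightarrow> t < length p \<Longrightarrow> ps p t \<le> j \<Longrightarrow> j \<le> ps p (Suc t) \<Longrightarrow>
      int (cdim (U \<inter> H j)) = int (cdim (U \<inter> G (ps p t))) +
        max 0 (int (cdim (U \<inter> G (ps p (Suc t)))) - int (cdim (U \<inter> G (ps p t)))
          + int (cdim (H j)) - int (cdim (G (ps p (Suc t)))))"
proof -
  have sub: "\<And>U. U \<in> XX \<Longrightarrow> csub U" using XX by blast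
  have "\<forall>t<length p. \<exists>Hs. block_chain G p XX t Hs"
    using block_chain_exists[OF G dec sub XXf] by blast
  then obtain Hs where Hs: "\<And>t. t < length p \<Longrightarrow> block_chain G p XX t (Hs t)" by metis
  show ?thesis
  proof (rule that)
    show "is_flag n r lam (refine G p Hs)" by (rule refine_is_flag[OF G dec sub Hs])
    show "refine G p Hs (ps p t) = G (ps p t)" if "t \<le> length p" for t
      by (rule refine_boundary[OF G dec sub Hs that])
    show "int (cdim (U \<inter> refine G p Hs j)) = int (cdim (U \<inter> G (ps p t))) +
        max 0 (int (cdim (U \<inter> G (ps p (Suc t)))) - int (cdim (U \<inter> G (ps p t)))
          + int (cdim (refine G p Hs j)) - int (cdim (G (ps p (Suc t)))))"
      if "U \<in> XX" "t < length p" "ps p t \<le> j" "j \<le> ps p (Suc t)" for U t j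
      using cdim_Int_refine[OF G dec sub Hs] XX that by blast
  qed
qed

section \<open>The product of an orbit with a column generic orbit\<close>

definition is_open_product :: "nat \<Rightarrow> nat \<Rightarrow> mat \<Rightarrow> mat \<Rightarrow> mat \<Rightarrow> bool" where
  "is_open_product n r A B C \<longleftrightarrow> occurs n r A B C \<and>
     (\<forall>C'. occurs n r A B C' \<and> C' \<noteq> C \<longrightarrow> stabdim n C < stabdim n C')"

lemma gprod_eqI: "is_open_product n r A B C \<Longrightarrow> gprod n r A B = C"
  unfolding gprod_def is_open_product_def[symmetric]
  by (rule the_equality) (auto simp: is_open_product_def dest: order.asym)

text \<open>In an occurring triple the middle flags coincide at the block boundaries, because
  \<open>B\<close> has the block data of the diagonal; so the outer pair inherits the block data of \<open>A\<close>.\<close>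
lemma occurs_same_block_data:
  assumes occ: "occurs n r A B C" and sdB: "same_block_data n p B (diagm lam)"
    and coA: "co n A = lam" and coB: "co n B = lam" and dec: "is_decomp n p"
  shows "same_block_data n p C A"
proof -
  obtain F G H where F: "is_flag n r (ro n A) F" and G: "is_flag n r lam G" and H: "is_flag n r lam H"
    and FG: "relpos n F G = A" and GH: "relpos n G H = B" and FH: "relpos n F H = C"
    using occ coA coB unfolding occurs_def by metis
  have GH_boundary: "G (ps p t) = H (ps p t)" if t: "t \<le> length p" for t
  proof -
    let ?b = "ps p t"
    have b: "?b \<le> n" using ps_le[OF dec] .
    have "cdim (G ?b \<inter> H ?b) = corner B ?b ?b" using cdim_Int_flags[OF G H b b] GH by simp
    also have "\<dots> = corner (diagm lam) ?b ?b" using sdB t b unfolding same_block_data_def by auto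
    finally have d: "cdim (G ?b \<inter> H ?b) = (\<Sum>k=1..?b. lam k)" by (simp add: corner_diagm)
    have sG: "csub (G ?b)" "G ?b \<subseteq> Vsp r" and sH: "csub (H ?b)" "H ?b \<subseteq> Vsp r"
      using flag_csub[OF G b] flag_subset_Vsp[OF G b] flag_csub[OF H b] flag_subset_Vsp[OF H b] by auto
    have "G ?b \<inter> H ?b = G ?b"
      by (rule subspace_eq_if_cdim_le[OF csub_Int[OF sG(1) sH(1)] _ sG(2)]) (use d flag_cdim[OF G b] in auto)
    moreover have "G ?b \<inter> H ?b = H ?b"
      by (rule subspace_eq_if_cdim_le[OF csub_Int[OF sG(1) sH(1)] _ sH(2)]) (use d flag_cdim[OF H b] in auto)
    ultimately show ?thesis by simp
  qed
  have "corner C i (ps p t) = corner A i (ps p t)" if "i \<le> n" "t \<le> length p" for i t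
    using cdim_Int_flags[OF F H that(1) ps_le[OF dec, of t]] cdim_Int_flags[OF F G that(1) ps_le[OF dec, of t]]
      FH FG GH_boundary[OF that(2)] by simp
  moreover have "corner C n j = corner A n j" if j: "j \<le> n" for j
  proof -
    have "corner C n j = cdim (H j)" using cdim_Int_flags[OF F H order_refl j] FH flag_Int_top[OF F H j] by simp
    also have "\<dots> = cdim (G j)" using flag_cdim[OF H j] flag_cdim[OF G j] by simp
    also have "\<dots> = corner A n j" using cdim_Int_flags[OF F G order_refl j] FG flag_Int_top[OF F G j] by simp
    finally show ?thesis .
  qed
  ultimately show ?thesis unfolding same_block_data_def by auto
qed

text \<open>Where \<open>K\<close> is one of the flags \<open>H\<close> was made generic against, the dimension formula of the
  refinement is exactly the corner law.\<close>
lemma corner_law_relpos_refinement: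
  assumes K: "is_flag n r kap K" and G: "is_flag n r lam G" and H: "is_flag n r lam H"
    and dec: "is_decomp n p"
    and boundary: "\<And>t. t \<le> length p \<Longrightarrow> H (ps p t) = G (ps p t)"
    and law: "\<And>i t j. i \<le> n \<Longrightarrow> t < length p \<Longrightarrow> ps p t \<le> j \<Longrightarrow> j \<le> ps p (Suc t) \<Longrightarrow>
      int (cdim (K i \<inter> H j)) = int (cdim (K i \<inter> G (ps p t))) +
        max 0 (int (cdim (K i \<inter> G (ps p (Suc t)))) - int (cdim (K i \<inter> G (ps p t)))
          + int (cdim (H j)) - int (cdim (G (ps p (Suc t)))))"
  shows "corner_law n p (relpos n K H)"
  unfolding corner_law_def
proof (intro allI impI)
  fix t i j assume t: "t < length p" and i: "i \<le> n" and j: "ps p t \<le> j \<and> j \<le> ps p (Suc t)"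
  let ?M = "relpos n K H"
  have hn: "ps p (Suc t) \<le> n" using ps_le[OF dec] .
  have jn: "j \<le> n" using j hn by simp
  have at_boundary: "corner ?M i (ps p u) = cdim (K i \<inter> G (ps p u))" if "u \<le> length p" for u
    using cdim_Int_flags[OF K H i ps_le[OF dec, of u]] boundary[OF that] by simp
  have last_row: "corner ?M n j' = cdim (H j')" if "j' \<le> n" for j'
    using cdim_Int_flags[OF K H order_refl that] flag_Int_top[OF K H that] by simp
  show "int (corner ?M i j) = int (corner ?M i (ps p t)) + max 0 (int (corner ?M i (ps p (Suc t)))
      - int (corner ?M i (ps p t)) + int (corner ?M n j) - int (corner ?M n (ps p (Suc t))))"
  proof -
    have "int (cdim (K i \<inter> H j)) = int (cdim (K i \<inter> G (ps p t))) +
        max 0 (int (cdim (K i \<inter> G (ps p (Suc t)))) - int (cdim (K i \<inter> G (ps p t)))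
          + int (cdim (H j)) - int (cdim (G (ps p (Suc t)))))"
      using law[OF i t] j by blast
    then show ?thesis
      using cdim_Int_flags[OF K H i jn] at_boundary[of t] at_boundary[of "Suc t"] t
        last_row[OF jn] last_row[OF hn] boundary[of "Suc t"] by simp
  qed
qed

lemma row_col_flags:
  assumes "A \<in> Theta n r" "co n A = lam"
  shows "is_flag n r (ro n A) (row_flag n r A)" "is_flag n r lam (col_flag n r A)"
  using row_flag_is_flag[OF assms(1)] col_flag_is_flag[OF assms(1)] assms(2) by simp_all

context
  fixes n r :: nat and lam :: comp and p :: "nat list" and A :: mat and H :: "nat \<Rightarrow> vect set"
  assumes n: "0 < n" and lam: "lam \<in> Lam n r" and dec: "is_decomp n p"
    and A: "A \<in> Theta n r" and coA: "co n A = lam" and H: "is_flag n r lam H"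
    and boundary: "\<And>t. t \<le> length p \<Longrightarrow> H (ps p t) = col_flag n r A (ps p t)"
    and law: "\<And>U t j. U \<in> row_flag n r A ` {..n} \<union> col_flag n r A ` {..n} \<Longrightarrow>
      t < length p \<Longrightarrow> ps p t \<le> j \<Longrightarrow> j \<le> ps p (Suc t) \<Longrightarrow>
      int (cdim (U \<inter> H j)) = int (cdim (U \<inter> col_flag n r A (ps p t))) +
        max 0 (int (cdim (U \<inter> col_flag n r A (ps p (Suc t)))) - int (cdim (U \<inter> col_flag n r A (ps p t)))
          + int (cdim (H j)) - int (cdim (col_flag n r A (ps p (Suc t)))))"
begin

lemma relpos_col_flag_refinement:
  "relpos n (col_flag n r A) H \<in> Theta n r" "ro n (relpos n (col_flag n r A) H) = lam"
  "co n (relpos n (col_flag n r A) H) = lam" "col_generic n p (relpos n (col_flag n r A) H)"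
  "same_block_data n p (relpos n (col_flag n r A) H) (diagm lam)"
proof -
  note G = row_col_flags(2)[OF A coA]
  show "relpos n (col_flag n r A) H \<in> Theta n r" "ro n (relpos n (col_flag n r A) H) = lam"
    "co n (relpos n (col_flag n r A) H) = lam"
    using relpos_Theta[OF G H] relpos_ro[OF G H] relpos_co[OF G H] Lam_supp[OF lam] by blast+
  show "col_generic n p (relpos n (col_flag n r A) H)"
    using law by (intro corner_law_col_generic relpos_supported
        corner_law_relpos_refinement[OF G G H dec boundary]) auto
  show "same_block_data n p (relpos n (col_flag n r A) H) (diagm lam)"
    unfolding same_block_data_def
  proof (intro conjI allI impI)
    fix i t assume i: "i \<le> n" and t: "t \<le> length p"
    have b: "ps p t \<le> n" using ps_le[OF dec] .
    show "corner (relpos n (col_flag n r A) H) i (ps p t) = corner (diagm lam) i (ps p t)"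
      using cdim_Int_flags[OF G H i b] boundary[OF t] flag_Int[OF G i b] flag_cdim[OF G] corner_diagm i b
      by simp
  next
    fix j assume j: "j \<le> n"
    show "corner (relpos n (col_flag n r A) H) n j = corner (diagm lam) n j"
      using cdim_Int_flags[OF G H order_refl j] flag_Int_top[OF G H j] flag_cdim[OF H j] corner_diagm j
      by simp
  qed
qed

lemma relpos_row_flag_refinement:
  "relpos n (row_flag n r A) H \<in> Theta n r" "co n (relpos n (row_flag n r A) H) = lam"
  "col_generic n p (relpos n (row_flag n r A) H)" "same_block_data n p (relpos n (row_flag n r A) H) A"
proof -
  note F = row_col_flags(1)[OF A coA] and G = row_col_flags(2)[OF A coA]
  show "relpos n (row_flag n r A) H \<in> Theta n r" "co n (relpos n (row_flag n r A) H) = lam"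
    using relpos_Theta[OF F H] relpos_co[OF F H] Lam_supp[OF lam] by blast+
  show "col_generic n p (relpos n (row_flag n r A) H)"
    using law by (intro corner_law_col_generic relpos_supported
        corner_law_relpos_refinement[OF F G H dec boundary]) auto
  show "same_block_data n p (relpos n (row_flag n r A) H) A"
    unfolding same_block_data_def
  proof (intro conjI allI impI)
    fix i t assume i: "i \<le> n" and t: "t \<le> length p"
    have b: "ps p t \<le> n" using ps_le[OF dec] .
    show "corner (relpos n (row_flag n r A) H) i (ps p t) = corner A i (ps p t)"
      using cdim_Int_flags[OF F H i b] boundary[OF t] cdim_row_flag_Int_col_flag[OF A i b] by simp
  next
    fix j assume j: "j \<le> n"
    show "corner (relpos n (row_flag n r A) H) n j = corner A n j"
      using cdim_Int_flags[OF F H order_refl j] flag_Int_top[OF F H j] flag_cdim[OF H j]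
        cdim_row_flag_Int_col_flag[OF A order_refl j] flag_Int_top[OF F G j] flag_cdim[OF G j]
        row_flag_top[OF A] by simp
  qed
qed

lemma is_open_product_refinement:
  "is_open_product n r A (relpos n (col_flag n r A) H) (relpos n (row_flag n r A) H)"
  unfolding is_open_product_def
proof (intro conjI allI impI)
  note B = relpos_col_flag_refinement and C = relpos_row_flag_refinement
  show occ: "occurs n r A (relpos n (col_flag n r A) H) (relpos n (row_flag n r A) H)"
    unfolding occurs_def
    by (rule exI[of _ "row_flag n r A"], rule exI[of _ "col_flag n r A"], rule exI[of _ H], intro conjI)
       (simp_all add: row_col_flags[OF A coA] col_flag_is_flag[OF A] H B(3) relpos_row_col_flag[OF A])
  fix C' assume C': "occurs n r A (relpos n (col_flag n r A) H) C' \<and> C' \<noteq> relpos n (row_flag n r A) H"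
  have "same_block_data n p (relpos n (row_flag n r A) H) C'"
    using occurs_same_block_data[OF _ B(5) coA B(3) dec] C' C(4) same_block_data_trans same_block_data_sym
    by blast
  moreover have "supported n C'" using C' relpos_supported unfolding occurs_def by metis
  ultimately show "stabdim n (relpos n (row_flag n r A) H) < stabdim n C'"
    using stabdim_col_generic_less[OF dec n relpos_supported _ C(3)] C' by blast
qed

end

lemma open_product_exists:
  assumes n: "0 < n" and lam: "lam \<in> Lam n r" and dec: "is_decomp n p"
    and A: "A \<in> Theta n r" and coA: "co n A = lam"
  obtains B C where "B \<in> Theta n r" "ro n B = lam" "co n B = lam"
    "col_generic n p B" "same_block_data n p B (diagm lam)"
    "is_open_product n r A B C" "C \<in> Theta n r" "co n C = lam" "col_generic n p C"
    "col_generic n p A \<Longrightarrow> C = A"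
proof -
  let ?F = "row_flag n r A" and ?G = "col_flag n r A"
  note flags = row_col_flags[OF A coA]
  have "U \<in> ?F ` {..n} \<union> ?G ` {..n} \<Longrightarrow> csub U \<and> U \<subseteq> Vsp r" for U
    using flag_csub flag_subset_Vsp flags by blast
  then obtain H where H: "is_flag n r lam H" "\<And>t. t \<le> length p \<Longrightarrow> H (ps p t) = ?G (ps p t)"
    "\<And>U t j. U \<in> ?F ` {..n} \<union> ?G ` {..n} \<Longrightarrow> t < length p \<Longrightarrow> ps p t \<le> j \<Longrightarrow> j \<le> ps p (Suc t) \<Longrightarrow>
      int (cdim (U \<inter> H j)) = int (cdim (U \<inter> ?G (ps p t))) +
        max 0 (int (cdim (U \<inter> ?G (ps p (Suc t)))) - int (cdim (U \<inter> ?G (ps p t)))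
          + int (cdim (H j)) - int (cdim (?G (ps p (Suc t)))))"
    using generic_refinement_exists[OF flags(2) dec, of "?F ` {..n} \<union> ?G ` {..n}"] by blast
  note B = relpos_col_flag_refinement[OF n lam dec A coA H]
    and C = relpos_row_flag_refinement[OF n lam dec A coA H]
  have "col_generic n p A \<Longrightarrow> relpos n ?F H = A"
    using col_generic_unique[OF dec n relpos_supported Theta_supported[OF A] C(3) _ C(4)] by blast
  then show ?thesis
    using that B C is_open_product_refinement[OF n lam dec A coA H] by blast
qed

section \<open>Transposition and the block open orbit\<close>

definition mtranspose :: "mat \<Rightarrow> mat" where
  "mtranspose M = (\<lambda>i j. M j i)"

lemma mtranspose_apply [simp]: "mtranspose M i j = M j i"
  by (simp add: mtranspose_def)

lemma mtranspose_mtranspose [simp]: "mtranspose (mtranspose M) = M"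
  by (simp add: mtranspose_def)

lemma corner_mtranspose: "corner (mtranspose M) i j = corner M j i"
  unfolding corner_def mtranspose_def by (rule sum.swap)

lemma ro_mtranspose [simp]: "ro n (mtranspose M) = co n M"
  and co_mtranspose [simp]: "co n (mtranspose M) = ro n M"
  by (simp_all add: ro_def co_def)

lemma Theta_mtranspose [simp]: "mtranspose M \<in> Theta n r \<longleftrightarrow> M \<in> Theta n r"
proof -
  have "(\<Sum>i=1..n. \<Sum>j=1..n. M j i) = (\<Sum>i=1..n. \<Sum>j=1..n. M i j)" by (rule sum.swap)
  then show ?thesis unfolding Theta_def by auto
qed

lemma stabdim_mtranspose [simp]: "stabdim n (mtranspose M) = stabdim n M"
proof -
  have "stabdim n (mtranspose M) = (\<Sum>i=1..n. \<Sum>j=1..n. M j i * corner M j i)"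
    by (simp add: stabdim_corner corner_mtranspose)
  also have "\<dots> = (\<Sum>j=1..n. \<Sum>i=1..n. M j i * corner M j i)" by (rule sum.swap)
  finally show ?thesis by (simp add: stabdim_corner)
qed

lemma row_generic_iff_mtranspose: "row_generic n p M \<longleftrightarrow> col_generic n p (mtranspose M)"
  unfolding row_generic_def col_generic_def generic_sub_def mtranspose_def by blast

text \<open>The body of the definition of \<^const>\<open>open_orb\<close>.\<close>
definition is_open_orb :: "nat \<Rightarrow> comp \<Rightarrow> mat \<Rightarrow> bool" where
  "is_open_orb m mu X \<longleftrightarrow> X \<in> Theta m (\<Sum>i=1..m. mu i) \<and> ro m X = mu \<and> co m X = mu \<and>
      (\<forall>A'. A' \<in> Theta m (\<Sum>i=1..m. mu i) \<and> ro m A' = mu \<and> co m A' = mu \<and> A' \<noteq> X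
            \<longrightarrow> stabdim m X < stabdim m A')"

lemma open_orb_eqI: "is_open_orb m mu X \<Longrightarrow> open_orb m mu = X"
  unfolding open_orb_def is_open_orb_def[symmetric]
  by (rule the_equality) (auto simp: is_open_orb_def dest: order.asym)

lemma is_open_orb_mtranspose: "is_open_orb m mu X \<Longrightarrow> is_open_orb m mu (mtranspose X)"
  unfolding is_open_orb_def by (metis Theta_mtranspose co_mtranspose mtranspose_mtranspose
      ro_mtranspose stabdim_mtranspose)

lemma open_orb_symmetric:
  "is_open_orb m mu X \<Longrightarrow> open_orb m mu j i = open_orb m mu i j"
  using open_orb_eqI is_open_orb_mtranspose by (metis mtranspose_apply)

lemma rect_diagm:
  "1 \<le> a \<Longrightarrow> rect (diagm lam) (a - 1) a j1 j2 = (if j1 < a \<and> a \<le> j2 then lam a else 0)"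
  using rect_row[of a "diagm lam" j1 j2] by (simp add: diagm_def)

lemma block_diagonal:
  assumes sd: "same_block_data n p M (diagm lam)"
    and a: "1 \<le> a" "a \<le> n" and t: "t < length p" and b: "ps p t < b" "b \<le> ps p (Suc t)"
    and na: "\<not> (ps p t < a \<and> a \<le> ps p (Suc t))"
  shows "M a b = 0"
proof -
  have "M a b \<le> rect M (a - 1) a (ps p t) (ps p (Suc t))" by (rule entry_le_rect) (use a b in auto)
  also have "\<dots> = rect (diagm lam) (a - 1) a (ps p t) (ps p (Suc t))" by (rule same_block_data_rect[OF sd a t])
  also have "\<dots> = 0" using rect_diagm[OF a(1)] na by auto
  finally show ?thesis by simp
qed

lemma sum_shift_block: "(\<Sum>b=1..m. f (s + b)) = (\<Sum>j\<in>{s<..s + m}. f j)"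
  for f :: "nat \<Rightarrow> 'a::comm_monoid_add"
proof -
  have "(\<Sum>b=1..m. f (s + b)) = (\<Sum>j=1 + s..m + s. f j)"
    using sum.shift_bounds_cl_nat_ivl[of f 1 s m] by (simp add: add.commute)
  also have "{1 + s..m + s} = {s<..s + m}" by auto
  finally show ?thesis .
qed

definition block_sub :: "mat \<Rightarrow> nat list \<Rightarrow> nat \<Rightarrow> mat" where
  "block_sub M p t = (\<lambda>a b. if a \<in> {1..p ! t} \<and> b \<in> {1..p ! t} then M (ps p t + a) (ps p t + b) else 0)"

lemma block_sub_supported: "supported (p ! t) (block_sub M p t)"
  unfolding supported_def block_sub_def by auto

context
  fixes n r :: nat and lam :: comp and p :: "nat list" and M :: mat
  assumes lam: "lam \<in> Lam n r" and dec: "is_decomp n p"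
    and cg: "col_generic n p M" and sd: "same_block_data n p M (diagm lam)"
    and roM: "ro n M = lam" and coM: "co n M = lam"
begin

lemma block_basic:
  assumes "t < length p"
  shows "ps p (Suc t) = ps p t + p ! t" "0 < p ! t" "ps p t + p ! t \<le> n"
  using ps_Suc[OF assms] ps_less_Suc[OF dec assms] ps_le[OF dec, of "Suc t"] by auto

lemma outside_block_zero:
  assumes t: "t < length p" and a: "a \<in> {ps p t<..ps p (Suc t)}" and b: "b \<in> {1..n} - {ps p t<..ps p (Suc t)}"
  shows "M a b = 0" "M b a = 0"
proof -
  have hn: "ps p (Suc t) \<le> n" using ps_le[OF dec] .
  have b1: "1 \<le> b" "b \<le> n" using b by auto
  note bt = block_of[OF dec b1]
  have "block_of p b \<noteq> t" using bt b by auto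
  then have "\<not> (ps p (block_of p b) < a \<and> a \<le> ps p (Suc (block_of p b)))"
    using block_unique[OF t bt(1)] a by auto
  then show "M a b = 0" using block_diagonal[OF sd _ _ bt] a hn by auto
  show "M b a = 0" by (rule block_diagonal[OF sd _ _ t]) (use a b in auto)
qed

lemma block_row_sum:
  assumes t: "t < length p" and a: "a \<in> {ps p t<..ps p (Suc t)}"
  shows "(\<Sum>j\<in>{ps p t<..ps p (Suc t)}. M a j) = lam a"
proof -
  have "(\<Sum>j\<in>{ps p t<..ps p (Suc t)}. M a j) = (\<Sum>j=1..n. M a j)"
    using ps_le[OF dec, of "Suc t"] outside_block_zero(1)[OF t a]
    by (intro sum.mono_neutral_left) auto
  then show ?thesis using roM unfolding ro_def by metis
qed

lemma block_col_sum:
  assumes t: "t < length p" and b: "b \<in> {ps p t<..ps p (Suc t)}"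
  shows "(\<Sum>i\<in>{ps p t<..ps p (Suc t)}. M i b) = lam b"
proof -
  have "(\<Sum>i\<in>{ps p t<..ps p (Suc t)}. M i b) = (\<Sum>i=1..n. M i b)"
    using ps_le[OF dec, of "Suc t"] outside_block_zero(2)[OF t b]
    by (intro sum.mono_neutral_left) auto
  then show ?thesis using coM unfolding co_def by metis
qed

lemma block_sub_ro_co:
  assumes t: "t < length p"
  shows "ro (p ! t) (block_sub M p t) = piece lam p t" "co (p ! t) (block_sub M p t) = piece lam p t"
proof -
  note bb = block_basic[OF t]
  show "ro (p ! t) (block_sub M p t) = piece lam p t"
  proof
    fix a
    show "ro (p ! t) (block_sub M p t) a = piece lam p t a"
    proof (cases "a \<in> {1..p ! t}")
      case True
      have "ro (p ! t) (block_sub M p t) a = (\<Sum>b=1..p ! t. M (ps p t + a) (ps p t + b))"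
        unfolding ro_def block_sub_def using True by (intro sum.cong) auto
      also have "\<dots> = lam (ps p t + a)"
        using sum_shift_block[of "M (ps p t + a)"] block_row_sum[OF t, of "ps p t + a"] bb True by auto
      finally show ?thesis using True by (simp add: piece_def)
    qed (auto simp: ro_def block_sub_def piece_def)
  qed
  show "co (p ! t) (block_sub M p t) = piece lam p t"
  proof
    fix b
    show "co (p ! t) (block_sub M p t) b = piece lam p t b"
    proof (cases "b \<in> {1..p ! t}")
      case True
      have "co (p ! t) (block_sub M p t) b = (\<Sum>a=1..p ! t. M (ps p t + a) (ps p t + b))"
        unfolding co_def block_sub_def using True by (intro sum.cong) auto
      also have "\<dots> = lam (ps p t + b)"
        using sum_shift_block[of "\<lambda>i. M i (ps p t + b)"] block_col_sum[OF t, of "ps p t + b"] bb True by auto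
      finally show ?thesis using True by (simp add: piece_def)
    qed (auto simp: co_def block_sub_def piece_def)
  qed
qed

lemma block_sub_generic:
  assumes t: "t < length p" shows "col_generic (p ! t) [p ! t] (block_sub M p t)"
proof -
  have g: "generic_sub {1..n} {ps p t + 1..ps p (Suc t)} M" using cg t unfolding col_generic_def by auto
  have "generic_sub {1..p ! t} {1..p ! t} (block_sub M p t)"
    using g block_basic[OF t] unfolding generic_sub_def block_sub_def by auto
  then show ?thesis unfolding col_generic_def by (simp add: ps_def)
qed

text \<open>A single block is a decomposition of its own; there the block data are the row and
  column sums, so the generic block is the open orbit.\<close>
lemma is_open_orb_block_sub:
  assumes t: "t < length p" shows "is_open_orb (p ! t) (piece lam p t) (block_sub M p t)"
  unfolding is_open_orb_def
proof (intro conjI allI impI)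
  let ?m = "p ! t" and ?mu = "piece lam p t" and ?X = "block_sub M p t"
  have m: "0 < ?m" using block_basic[OF t] by simp
  have dec1: "is_decomp ?m [?m]" using m by (simp add: is_decomp_def)
  show ro: "ro ?m ?X = ?mu" and co: "co ?m ?X = ?mu" using block_sub_ro_co[OF t] by auto
  have "sum ?mu {1..?m} = (\<Sum>i=1..?m. \<Sum>j=1..?m. ?X i j)" unfolding ro[symmetric] by (simp add: ro_def)
  then show "?X \<in> Theta ?m (sum ?mu {1..?m})"
    using block_sub_supported unfolding Theta_def supported_def by auto
  fix A' assume A': "A' \<in> Theta ?m (sum ?mu {1..?m}) \<and> ro ?m A' = ?mu \<and> co ?m A' = ?mu \<and> A' \<noteq> ?X"
  have "same_block_data ?m [?m] ?X A'"
    unfolding same_block_data_def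
  proof (intro conjI allI impI)
    fix i u assume "i \<le> ?m" "u \<le> length [?m]"
    then have "ps [?m] u = 0 \<or> ps [?m] u = ?m" by (cases u) (auto simp: ps_def)
    then show "corner ?X i (ps [?m] u) = corner A' i (ps [?m] u)"
      using ro A' corner_ro[of ?X i ?m] corner_ro[of A' i ?m] by auto
  next
    fix j assume "j \<le> ?m"
    show "corner ?X ?m j = corner A' ?m j" using co A' corner_co[of ?X ?m j] corner_co[of A' ?m j] by simp
  qed
  moreover have "supported ?m A'" using A' Theta_supported by blast
  ultimately show "stabdim ?m ?X < stabdim ?m A'"
    using stabdim_col_generic_less[OF dec1 m block_sub_supported _ block_sub_generic[OF t]] A' by blast
qed

lemma o_blk_eq:
  assumes su: "supported n M" shows "o_blk lam p = M"
proof (intro ext)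
  fix a b
  show "o_blk lam p a b = M a b"
  proof (cases "a \<in> {1..n} \<and> b \<in> {1..n}")
    case True
    then have a1: "1 \<le> a" "a \<le> n" and b1: "1 \<le> b" "b \<le> n" by auto
    let ?t = "block_of p a"
    note ba = block_of[OF dec a1]
    have only: "\<And>i. i < length p \<Longrightarrow> inblock p i a \<Longrightarrow> i = ?t"
      using block_unique[OF _ ba(1) _ _ ba(2,3)] unfolding inblock_def by blast
    have "o_blk lam p a b = (\<Sum>i<length p. if i = ?t then (if inblock p i a \<and> inblock p i b
       then open_orb (p ! i) (piece lam p i) (a - ps p i) (b - ps p i) else 0) else 0)"
      unfolding o_blk_def by (intro sum.cong refl) (use only in auto)
    also have "\<dots> = (if inblock p ?t b
        then open_orb (p ! ?t) (piece lam p ?t) (a - ps p ?t) (b - ps p ?t) else 0)"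
      using ba by (simp add: inblock_def)
    also have "\<dots> = M a b"
    proof (cases "inblock p ?t b")
      case True
      then show ?thesis
        using open_orb_eqI[OF is_open_orb_block_sub[OF ba(1)]] ba block_basic[OF ba(1)]
        unfolding block_sub_def inblock_def by auto
    next
      case False
      then show ?thesis using outside_block_zero(1)[OF ba(1)] ba b1 unfolding inblock_def by auto
    qed
    finally show ?thesis .
  next
    case False
    have "\<not> (inblock p i a \<and> inblock p i b)" if "i < length p" for i
      using False ps_le[OF dec, of "Suc i"] unfolding inblock_def by auto
    then have "o_blk lam p a b = 0" unfolding o_blk_def by (intro sum.neutral) auto
    moreover have "M a b = 0" using su False unfolding supported_def by blast
    ultimately show ?thesis by simp
  qed
qed

end

lemma o_blk_mtranspose:
  assumes "\<And>t. t < length p \<Longrightarrow> is_open_orb (p ! t) (piece lam p t) (open_orb (p ! t) (piece lam p t))"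
  shows "mtranspose (o_blk lam p) = o_blk lam p"
  using open_orb_symmetric[OF assms] by (auto simp: fun_eq_iff o_blk_def conj_commute intro!: sum.cong)

lemma relpos_swap: "relpos n G F = mtranspose (relpos n F G)"
  unfolding relpos_def mtranspose_def by (auto simp: fun_eq_iff ssum_commute Int_commute)

lemma occurs_mtranspose:
  assumes "occurs n r A B C"
  shows "occurs n r (mtranspose B) (mtranspose A) (mtranspose C)"
proof -
  obtain F G H where F: "is_flag n r (ro n A) F" and G: "is_flag n r (co n A) G" and H: "is_flag n r (co n B) H"
    and FG: "relpos n F G = A" and GH: "relpos n G H = B" and FH: "relpos n F H = C"
    using assms unfolding occurs_def by blast
  have "co n A j \<noteq> 0 \<Longrightarrow> j \<in> {1..n}" for j
    using relpos_supported[of n F G] FG unfolding co_def supported_def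
    by (auto elim!: sum.not_neutral_contains_not_neutral)
  then have "ro n B = co n A" using relpos_ro[OF G H] GH by blast
  then show ?thesis
    unfolding occurs_def using F G H FG GH FH relpos_swap[of n _ F] relpos_swap[of n H G] by auto
qed

lemma is_open_product_mtranspose:
  assumes "is_open_product n r A B C"
  shows "is_open_product n r (mtranspose B) (mtranspose A) (mtranspose C)"
  using assms occurs_mtranspose[of n r "mtranspose B" "mtranspose A"]
  unfolding is_open_product_def by (metis occurs_mtranspose mtranspose_mtranspose stabdim_mtranspose)

lemma diagm_Theta: "lam \<in> Lam n r \<Longrightarrow> diagm lam \<in> Theta n r"
  and co_diagm: "lam \<in> Lam n r \<Longrightarrow> co n (diagm lam) = lam"
  and ro_diagm: "lam \<in> Lam n r \<Longrightarrow> ro n (diagm lam) = lam"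
proof -
  assume lam: "lam \<in> Lam n r"
  have z: "lam j = 0" if "j \<notin> {1..n}" for j using Lam_supp[OF lam, of j] that by blast
  show "co n (diagm lam) = lam" "ro n (diagm lam) = lam"
    unfolding co_def ro_def diagm_def using z by (auto simp: fun_eq_iff)
  have "(\<Sum>i=1..n. \<Sum>j=1..n. diagm lam i j) = (\<Sum>i=1..n. lam i)"
    unfolding diagm_def by (rule sum.cong) auto
  then show "diagm lam \<in> Theta n r"
    using lam Lam_supp[OF lam] unfolding Theta_def Lam_def diagm_def by auto
qed

context
  fixes n r :: nat and lam :: comp and p :: "nat list"
  assumes n: "0 < n" and lam: "lam \<in> Lam n r" and dec: "is_decomp n p"
begin

lemma o_blk_eq_generic:
  assumes "B \<in> Theta n r" "ro n B = lam" "co n B = lam" "col_generic n p B"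
    "same_block_data n p B (diagm lam)"
  shows "o_blk lam p = B"
  using o_blk_eq[OF lam dec] assms Theta_supported by blast

lemma o_blk_left_product:
  assumes A: "A \<in> Theta n r" and coA: "co n A = lam"
  obtains C where "is_open_product n r A (o_blk lam p) C" "C \<in> Theta n r" "co n C = lam"
    "col_generic n p C" "col_generic n p A \<Longrightarrow> C = A"
proof -
  obtain B C where "B \<in> Theta n r" "ro n B = lam" "co n B = lam" "col_generic n p B"
    "same_block_data n p B (diagm lam)" "is_open_product n r A B C" "C \<in> Theta n r" "co n C = lam"
    "col_generic n p C" "col_generic n p A \<Longrightarrow> C = A"
    using open_product_exists[OF n lam dec A coA] by blast
  then show ?thesis using that o_blk_eq_generic by metis
qed

lemma o_blk_basic:
  shows "o_blk lam p \<in> Theta n r" "ro n (o_blk lam p) = lam" "co n (o_blk lam p) = lam"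
    "mtranspose (o_blk lam p) = o_blk lam p"
proof -
  obtain B C where B: "B \<in> Theta n r" "ro n B = lam" "co n B = lam" "col_generic n p B"
    "same_block_data n p B (diagm lam)"
    using open_product_exists[OF n lam dec diagm_Theta[OF lam] co_diagm[OF lam]] by metis
  then have oB: "o_blk lam p = B" by (rule o_blk_eq_generic)
  then show "o_blk lam p \<in> Theta n r" "ro n (o_blk lam p) = lam" "co n (o_blk lam p) = lam"
    using B by auto
  have "is_open_orb (p ! t) (piece lam p t) (open_orb (p ! t) (piece lam p t))" if "t < length p" for t
    using is_open_orb_block_sub[OF lam dec B(4,5,2,3) that] open_orb_eqI by metis
  then show "mtranspose (o_blk lam p) = o_blk lam p" by (rule o_blk_mtranspose)
qed

lemma o_blk_right_product:
  assumes B: "B \<in> Theta n r" and roB: "ro n B = lam"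
  obtains C where "is_open_product n r (o_blk lam p) B C" "C \<in> Theta n r" "ro n C = lam"
    "row_generic n p C" "row_generic n p B \<Longrightarrow> C = B"
proof -
  obtain C where C: "is_open_product n r (mtranspose B) (o_blk lam p) C" "C \<in> Theta n r" "co n C = lam"
    "col_generic n p C" "col_generic n p (mtranspose B) \<Longrightarrow> C = mtranspose B"
    using o_blk_left_product[of "mtranspose B"] B roB by auto
  have "is_open_product n r (o_blk lam p) B (mtranspose C)"
    using is_open_product_mtranspose[OF C(1)] o_blk_basic(4) by simp
  then show ?thesis
    using that[of "mtranspose C"] C row_generic_iff_mtranspose by (metis mtranspose_mtranspose
      ro_mtranspose Theta_mtranspose)
qed

end

section \<open>Ideals generated by the block open orbit\<close>

lemma Theta_finite: "finite (Theta n r)"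
proof -
  let ?S = "{f :: nat \<times> nat \<Rightarrow> nat. \<forall>x. (x \<in> {1..n} \<times> {1..n} \<longrightarrow> f x \<in> {..r}) \<and>
    (x \<notin> {1..n} \<times> {1..n} \<longrightarrow> f x = 0)}"
  have "finite ?S" by (rule finite_set_of_finite_funs) auto
  moreover have "Theta n r \<subseteq> curry ` ?S"
  proof
    fix A assume A: "A \<in> Theta n r"
    have "A i j \<le> r" if "i \<in> {1..n}" "j \<in> {1..n}" for i j
    proof -
      have "A i j \<le> (\<Sum>j=1..n. A i j)" by (rule member_le_sum) (use that in auto)
      also have "\<dots> \<le> (\<Sum>i=1..n. \<Sum>j=1..n. A i j)"
        by (rule member_le_sum[where f = "\<lambda>i. \<Sum>j=1..n. A i j"]) (use that in auto)
      finally show ?thesis using A unfolding Theta_def by simp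
    qed
    then have "case_prod A \<in> ?S" using A unfolding Theta_def by auto
    moreover have "A = curry (case_prod A)" by simp
    ultimately show "A \<in> curry ` ?S" by blast
  qed
  ultimately show ?thesis using finite_subset by blast
qed

lemma smult_eorb_right:
  assumes "B \<in> Theta n r"
  shows "smult n r x (eorb B) =
    (\<lambda>C. \<Sum>A\<in>Theta n r. if co n A = ro n B \<and> gprod n r A B = C then x A else (0::'k::field))"
proof
  fix C
  have "(\<Sum>B'\<in>Theta n r. if co n A = ro n B' \<and> gprod n r A B' = C then x A * eorb B B' else 0)
      = (if co n A = ro n B \<and> gprod n r A B = C then x A else 0)" for A
  proof -
    have "(\<Sum>B'\<in>Theta n r. if co n A = ro n B' \<and> gprod n r A B' = C then x A * eorb B B' else 0)
      = (\<Sum>B'\<in>Theta n r. if B' = B then (if co n A = ro n B \<and> gprod n r A B = C then x A else 0) else 0)"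
      by (rule sum.cong[OF refl]) (auto simp: eorb_def)
    also have "\<dots> = (if co n A = ro n B \<and> gprod n r A B = C then x A else 0)"
      using assms Theta_finite by (simp add: sum.delta')
    finally show ?thesis .
  qed
  then show "smult n r x (eorb B) C
      = (\<Sum>A\<in>Theta n r. if co n A = ro n B \<and> gprod n r A B = C then x A else 0)"
    unfolding smult_def by simp
qed

lemma smult_eorb_left:
  assumes "A \<in> Theta n r"
  shows "smult n r (eorb A) x =
    (\<lambda>C. \<Sum>B\<in>Theta n r. if co n A = ro n B \<and> gprod n r A B = C then x B else (0::'k::field))"
proof
  fix C
  have "smult n r (eorb A) x C = (\<Sum>A'\<in>Theta n r. if A' = A then
      (\<Sum>B\<in>Theta n r. if co n A = ro n B \<and> gprod n r A B = C then x B else 0) else 0)"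
    unfolding smult_def by (rule sum.cong[OF refl]) (auto simp: eorb_def intro!: sum.neutral sum.cong)
  then show "smult n r (eorb A) x C = (\<Sum>B\<in>Theta n r. if co n A = ro n B \<and> gprod n r A B = C then x B else 0)"
    using assms Theta_finite by (simp add: sum.delta')
qed

text \<open>Multiplying by a fixed orbit sends \<open>x\<close> to the pushforward of \<open>x\<close> along \<open>g\<close> (restricted to
  \<open>P\<close>); if \<open>g\<close> retracts \<open>P\<close> onto \<open>T\<close>, these pushforwards are exactly the span of \<open>T\<close>.\<close>
lemma pushforward_S0_eq_kspan:
  fixes P :: "mat \<Rightarrow> bool" and g :: "mat \<Rightarrow> mat"
  assumes T: "T \<subseteq> Theta n r" and gT: "\<And>A. A \<in> Theta n r \<Longrightarrow> P A \<Longrightarrow> g A \<in> T"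
    and Tg: "\<And>A. A \<in> T \<Longrightarrow> P A \<and> g A = A"
  shows "{(\<lambda>C. \<Sum>A\<in>Theta n r. if P A \<and> g A = C then x A else (0::'k::field)) | x. x \<in> S0 n r} = kspan T"
proof -
  have finT: "finite T" using T Theta_finite finite_subset by blast
  have kval: "(\<Sum>A'\<in>T. c A' * eorb A' C) = (if C \<in> T then c C else 0)" for c :: "mat \<Rightarrow> 'k" and C
    using finT by (simp add: eorb_def sum.delta' if_distrib[of "\<lambda>z. _ * z"] cong: if_cong)
  show ?thesis
  proof
    show "{(\<lambda>C. \<Sum>A\<in>Theta n r. if P A \<and> g A = C then x A else (0::'k)) | x. x \<in> S0 n r} \<subseteq> kspan T"
    proof clarify
      fix x :: "mat \<Rightarrow> 'k"
      define c where "c A' = (\<Sum>A\<in>Theta n r. if P A \<and> g A = A' then x A else 0)" for A'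
      have "(\<Sum>A\<in>Theta n r. if P A \<and> g A = C then x A else 0) = 0" if "C \<notin> T" for C
        by (rule sum.neutral) (use gT that in auto)
      then have "(\<lambda>C. \<Sum>A\<in>Theta n r. if P A \<and> g A = C then x A else 0) = (\<lambda>C. \<Sum>A'\<in>T. c A' * eorb A' C)"
        using kval c_def by auto
      then show "(\<lambda>C. \<Sum>A\<in>Theta n r. if P A \<and> g A = C then x A else 0) \<in> kspan T"
        unfolding kspan_def by blast
    qed
    show "kspan T \<subseteq> {(\<lambda>C. \<Sum>A\<in>Theta n r. if P A \<and> g A = C then x A else (0::'k)) | x. x \<in> S0 n r}"
    proof
      fix y :: "mat \<Rightarrow> 'k" assume "y \<in> kspan T"
      then obtain c where c: "y = (\<lambda>C. \<Sum>A\<in>T. c A * eorb A C)" unfolding kspan_def by blast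
      define x where "x A = (if A \<in> T then c A else 0)" for A
      have xS: "x \<in> S0 n r" unfolding S0_def x_def using T by auto
      have "(\<Sum>A\<in>Theta n r. if P A \<and> g A = C then x A else 0) = (\<Sum>A\<in>Theta n r. if A = C then x A else 0)" for C
        by (rule sum.cong[OF refl]) (use Tg in \<open>auto simp: x_def\<close>)
      also have "\<dots> C = (if C \<in> T then c C else 0)" for C
        using Theta_finite T by (auto simp: sum.delta x_def)
      finally have "y = (\<lambda>C. \<Sum>A\<in>Theta n r. if P A \<and> g A = C then x A else 0)" using c kval by auto
      then show "y \<in> {(\<lambda>C. \<Sum>A\<in>Theta n r. if P A \<and> g A = C then x A else (0::'k)) | x. x \<in> S0 n r}"
        using xS by blast
    qed
  qed
qed

context
  fixes n r :: nat and lam :: comp and p :: "nat list"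
  assumes n: "0 < n" and lam: "lam \<in> Lam n r" and dec: "is_decomp n p"
begin

lemma left_ideal_o_blk:
  "{smult n r x (eorb (o_blk lam p)) | x :: mat \<Rightarrow> 'k::field. x \<in> S0 n r}
     = kspan {A \<in> Theta n r. co n A = lam \<and> col_generic n p A}"
proof -
  have "gprod n r A (o_blk lam p) \<in> Theta n r \<and> co n (gprod n r A (o_blk lam p)) = lam \<and>
      col_generic n p (gprod n r A (o_blk lam p)) \<and> (col_generic n p A \<longrightarrow> gprod n r A (o_blk lam p) = A)"
    if "A \<in> Theta n r" "co n A = lam" for A
    using o_blk_left_product[OF n lam dec that] gprod_eqI by metis
  then show ?thesis
    unfolding smult_eorb_right[OF o_blk_basic(1)[OF n lam dec]] o_blk_basic(2)[OF n lam dec]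
    by (intro pushforward_S0_eq_kspan) auto
qed

lemma right_ideal_o_blk:
  "{smult n r (eorb (o_blk lam p)) x | x :: mat \<Rightarrow> 'k::field. x \<in> S0 n r}
     = kspan {A \<in> Theta n r. ro n A = lam \<and> row_generic n p A}"
proof -
  have "gprod n r (o_blk lam p) B \<in> Theta n r \<and> ro n (gprod n r (o_blk lam p) B) = lam \<and>
      row_generic n p (gprod n r (o_blk lam p) B) \<and> (row_generic n p B \<longrightarrow> gprod n r (o_blk lam p) B = B)"
    if "B \<in> Theta n r" "ro n B = lam" for B
    using o_blk_right_product[OF n lam dec that] gprod_eqI by metis
  then show ?thesis
    unfolding smult_eorb_left[OF o_blk_basic(1)[OF n lam dec]] o_blk_basic(3)[OF n lam dec]
    by (intro pushforward_S0_eq_kspan) (auto simp: eq_commute[of lam])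
qed

end

lemma sum_list_replicate_1: "sum_list (replicate k (Suc 0)) = k"
  by (induct k) auto

context
  fixes n i :: nat
  assumes i: "1 \<le> i" "i < n"
begin

lemma length_mdec: "length (mdec n i) = n - 1"
  using i by (simp add: mdec_def)

lemma mdec_is_decomp: "is_decomp n (mdec n i)"
  using i by (auto simp: mdec_def is_decomp_def sum_list_replicate_1)

lemma ps_mdec: "t \<le> n - 1 \<Longrightarrow> ps (mdec n i) t = (if t < i then t else t + 1)"
proof (cases "t < i")
  case True
  then have "take t (mdec n i) = replicate t 1" using i by (simp add: mdec_def take_append min_def)
  then show ?thesis using True by (simp add: ps_def sum_list_replicate_1)
next
  case False
  assume "t \<le> n - 1"
  then have "take t (mdec n i) = replicate (i - 1) 1 @ [2] @ replicate (t - i) 1" using i False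
    by (simp add: mdec_def take_append min_def Suc_diff_le)
  then show ?thesis using False i by (simp add: ps_def sum_list_replicate_1)
qed

lemma col_generic_mdec_iff: "col_generic n (mdec n i) A \<longleftrightarrow> generic_sub {1..n} {i, Suc i} A"
proof -
  have blk: "generic_sub {1..n} {ps (mdec n i) t + 1..ps (mdec n i) (Suc t)} A \<longleftrightarrow>
      (t = i - 1 \<longrightarrow> generic_sub {1..n} {i, Suc i} A)" if t: "t < n - 1" for t
  proof (cases "t = i - 1")
    case True
    then have "{ps (mdec n i) t + 1..ps (mdec n i) (Suc t)} = {i, Suc i}" using ps_mdec t i by auto
    then show ?thesis using True by simp
  next
    case False
    then have "\<exists>a. {ps (mdec n i) t + 1..ps (mdec n i) (Suc t)} = {a}" using ps_mdec t i by auto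
    then show ?thesis using False unfolding generic_sub_def by auto
  qed
  have "col_generic n (mdec n i) A \<longleftrightarrow> (\<forall>t<n - 1. t = i - 1 \<longrightarrow> generic_sub {1..n} {i, Suc i} A)"
    unfolding col_generic_def length_mdec using blk by simp
  also have "\<dots> \<longleftrightarrow> generic_sub {1..n} {i, Suc i} A" using i by auto
  finally show ?thesis .
qed

text \<open>When \<open>\<lambda>\<^sub>i \<lambda>\<^sub>i\<^sub>+\<^sub>1 = 0\<close> the diagonal matrix is itself generic in the columns \<open>i, i+1\<close>.\<close>
lemma a_orb_eq_diagm:
  assumes lam: "lam \<in> Lam n r" and z: "lam i * lam (Suc i) = 0"
  shows "a_orb n lam i = diagm lam"
  unfolding a_orb_def
proof (rule o_blk_eq_generic[OF _ lam mdec_is_decomp diagm_Theta[OF lam] ro_diagm[OF lam] co_diagm[OF lam]])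
  show "0 < n" using i by simp
  show "col_generic n (mdec n i) (diagm lam)"
    unfolding col_generic_mdec_iff generic_sub_def diagm_def using z by auto
  show "same_block_data n (mdec n i) (diagm lam) (diagm lam)"
    unfolding same_block_data_def by simp
qed

end

lemma left_ideal_a_orb:
  assumes n: "0 < n" and lam: "lam \<in> Lam n r" and i: "1 \<le> i" "i < n"
  shows "{smult n r x (eorb (a_orb n lam i)) | x :: mat \<Rightarrow> 'k::field. x \<in> S0 n r}
    = kspan {A \<in> Theta n r. co n A = lam \<and> generic_sub {1..n} {i, Suc i} A}"
proof -
  have "{A \<in> Theta n r. co n A = lam \<and> col_generic n (mdec n i) A}
      = {A \<in> Theta n r. co n A = lam \<and> generic_sub {1..n} {i, Suc i} A}"
    using col_generic_mdec_iff[OF i] by blast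
  then show ?thesis
    using left_ideal_o_blk[OF n lam mdec_is_decomp[OF i]] unfolding a_orb_def by simp
qed

theorem mainTheorem11:
  fixes n r :: nat and lam :: comp
  assumes "0 < n" "0 < r" "lam \<in> Lam n r"
  shows
    "(\<forall>i. 1 \<le> i \<and> i < n \<and> lam i * lam (Suc i) = 0 \<longrightarrow>
        (eorb (a_orb n lam i) :: mat \<Rightarrow> 'k::field) = eorb (diagm lam))
     \<and> (\<forall>p. is_decomp n p \<longrightarrow>
        {smult n r x (eorb (o_blk lam p)) | x :: mat \<Rightarrow> 'k. x \<in> S0 n r}
          = kspan {A \<in> Theta n r. co n A = lam \<and> col_generic n p A})
     \<and> (\<forall>i. 1 \<le> i \<and> i < n \<longrightarrow>
        {smult n r x (eorb (a_orb n lam i)) | x :: mat \<Rightarrow> 'k. x \<in> S0 n r}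
          = kspan {A \<in> Theta n r. co n A = lam \<and> generic_sub {1..n} {i, Suc i} A})
     \<and> (\<forall>p. is_decomp n p \<longrightarrow>
        {smult n r (eorb (o_blk lam p)) x | x :: mat \<Rightarrow> 'k. x \<in> S0 n r}
          = kspan {A \<in> Theta n r. ro n A = lam \<and> row_generic n p A})"
  by (simp add: a_orb_eq_diagm[OF _ _ assms(3)] left_ideal_a_orb[OF assms(1,3)]
      left_ideal_o_blk[OF assms(1,3)] right_ideal_o_blk[OF assms(1,3)])

end
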